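(* The category $\mathbf{AlgFrm}$ of algebraic frames and coherent frame homomorphisms is dually equivalent to the category $\mathbf{AlgLPries}$ of algebraic L-spaces and coherent L-morphisms.
   Context: A frame is a complete lattice satisfying $a\wedge\bigvee S=\bigvee\{a\wedge s\mid s\in S\}$; frame homomorphisms preserve finite meets and arbitrary joins. In a frame $L$, $a\ll b$ means whenever $b\le\bigvee S$ there is finite $T\subseteq S$ with $a\le\bigvee T$; $a$ is compact if $a\ll a$; $K(L)$ is the set of compact elements. $L$ is algebraic if $a=\bigvee\{b\in K(L)\mid b\le a\}$ for all $a$. A frame homomorphism is coherent if it maps compact elements to compact elements. A Priestley space is a Stone space $X$ with a partial order such that clopen upsets separate points. An L-space is a Priestley space in which the downset of each clopen set is clopen and the closure of each open upset is open. ${\sf ClopUp}(X)$ is the set of clopen upsets; $\mathrm{cl}$ denotes closure. An L-morphism is a continuous order-preserving map $f:X\to X'$ between L-spaces with $f^{-1}(\mathrm{cl}\,U)=\mathrm{cl}\,f^{-1}(U)$ for every open upset $U$ of $X'$. The spatial part of $X$ is $Y=\{y\in X\mid{\downarrow}y\text{ clopen}\}$. A Scott upset is a closed upset $F$ with $\min F\subseteq Y$; ${\sf ClopSUp}(X)$ is the set of clopen Scott upsets; $\mathrm{core}\,U=\bigcup\{V\in{\sf ClopSUp}(X)\mid V\subseteq U\}$ for $U\in{\sf ClopUp}(X)$. $X$ is an algebraic L-space if $\mathrm{core}\,U$ is dense in $U$ for each $U\in{\sf ClopUp}(X)$. An L-morphism $f:X_1\to X_2$ is coherent if $f^{-1}(\mathrm{core}\,U)\subseteq\mathrm{core}\,f^{-1}(U)$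 for all $U\in{\sf ClopUp}(X_2)$. *)

theory Defs
  imports "HOL-Analysis.Analysis"
begin

definition poset_on :: "'a set \<Rightarrow> ('a \<Rightarrow> 'a \<Rightarrow> bool) \<Rightarrow> bool" where
  "poset_on A le \<longleftrightarrow> (\<forall>x\<in>A. le x x)
     \<and> (\<forall>x\<in>A. \<forall>y\<in>A. le x y \<and> le y x \<longrightarrow> x = y)
     \<and> (\<forall>x\<in>A. \<forall>y\<in>A. \<forall>z\<in>A. le x y \<and> le y z \<longrightarrow> le x z)"

definition is_lub :: "'a set \<Rightarrow> ('a \<Rightarrow> 'a \<Rightarrow> bool) \<Rightarrow> 'a set \<Rightarrow> 'a \<Rightarrow> bool" where
  "is_lub A le S x \<longleftrightarrow> x \<in> A \<and> (\<forall>s\<in>S. le s x) \<and> (\<forall>y\<in>A. (\<forall>s\<in>S. le s y) \<longrightarrow> le x y)"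

definition is_glb :: "'a set \<Rightarrow> ('a \<Rightarrow> 'a \<Rightarrow> bool) \<Rightarrow> 'a set \<Rightarrow> 'a \<Rightarrow> bool" where
  "is_glb A le S x \<longleftrightarrow> x \<in> A \<and> (\<forall>s\<in>S. le x s) \<and> (\<forall>y\<in>A. (\<forall>s\<in>S. le y s) \<longrightarrow> le y x)"

definition fjoin :: "'a set \<Rightarrow> ('a \<Rightarrow> 'a \<Rightarrow> bool) \<Rightarrow> 'a set \<Rightarrow> 'a" where
  "fjoin A le S = (THE x. is_lub A le S x)"

definition fmeet :: "'a set \<Rightarrow> ('a \<Rightarrow> 'a \<Rightarrow> bool) \<Rightarrow> 'a \<Rightarrow> 'a \<Rightarrow> 'a" where
  "fmeet A le a b = (THE x. is_glb A le {a, b} x)"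

definition ftop :: "'a set \<Rightarrow> ('a \<Rightarrow> 'a \<Rightarrow> bool) \<Rightarrow> 'a" where
  "ftop A le = fjoin A le A"

definition frame :: "'a set \<Rightarrow> ('a \<Rightarrow> 'a \<Rightarrow> bool) \<Rightarrow> bool" where
  "frame A le \<longleftrightarrow> poset_on A le
     \<and> (\<forall>S. S \<subseteq> A \<longrightarrow> (\<exists>x. is_lub A le S x))
     \<and> (\<forall>a\<in>A. \<forall>S. S \<subseteq> A \<longrightarrow>
          fmeet A le a (fjoin A le S) = fjoin A le ((\<lambda>s. fmeet A le a s) ` S))"

definition frame_hom :: "'a set \<Rightarrow> ('a \<Rightarrow> 'a \<Rightarrow> bool) \<Rightarrow> 'b set \<Rightarrow> ('b \<Rightarrow> 'b \<Rightarrow> bool)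
    \<Rightarrow> ('a \<Rightarrow> 'b) \<Rightarrow> bool" where
  "frame_hom A1 le1 A2 le2 h \<longleftrightarrow> (\<forall>x\<in>A1. h x \<in> A2)
     \<and> h (ftop A1 le1) = ftop A2 le2
     \<and> (\<forall>a\<in>A1. \<forall>b\<in>A1. h (fmeet A1 le1 a b) = fmeet A2 le2 (h a) (h b))
     \<and> (\<forall>S. S \<subseteq> A1 \<longrightarrow> h (fjoin A1 le1 S) = fjoin A2 le2 (h ` S))"

definition way_below :: "'a set \<Rightarrow> ('a \<Rightarrow> 'a \<Rightarrow> bool) \<Rightarrow> 'a \<Rightarrow> 'a \<Rightarrow> bool" where
  "way_below A le a b \<longleftrightarrow> (\<forall>S. S \<subseteq> A \<longrightarrow> le b (fjoin A le S) \<longrightarrow>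
       (\<exists>T. T \<subseteq> S \<and> finite T \<and> le a (fjoin A le T)))"

definition compact_elems :: "'a set \<Rightarrow> ('a \<Rightarrow> 'a \<Rightarrow> bool) \<Rightarrow> 'a set" where
  "compact_elems A le = {a \<in> A. way_below A le a a}"

definition algebraic_frame :: "'a set \<Rightarrow> ('a \<Rightarrow> 'a \<Rightarrow> bool) \<Rightarrow> bool" where
  "algebraic_frame A le \<longleftrightarrow> frame A le
     \<and> (\<forall>a\<in>A. a = fjoin A le {b \<in> compact_elems A le. le b a})"

definition coherent_frame_hom :: "'a set \<Rightarrow> ('a \<Rightarrow> 'a \<Rightarrow> bool) \<Rightarrow> 'b set \<Rightarrow> ('b \<Rightarrow> 'b \<Rightarrow> bool)
    \<Rightarrow> ('a \<Rightarrow> 'b) \<Rightarrow> bool" where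
  "coherent_frame_hom A1 le1 A2 le2 h \<longleftrightarrow> frame_hom A1 le1 A2 le2 h
     \<and> (\<forall>a \<in> compact_elems A1 le1. h a \<in> compact_elems A2 le2)"

definition alg_frame_iso :: "'a set \<Rightarrow> ('a \<Rightarrow> 'a \<Rightarrow> bool) \<Rightarrow> 'b set \<Rightarrow> ('b \<Rightarrow> 'b \<Rightarrow> bool) \<Rightarrow> bool" where
  "alg_frame_iso A1 le1 A2 le2 \<longleftrightarrow> (\<exists>h g. coherent_frame_hom A1 le1 A2 le2 h
     \<and> coherent_frame_hom A2 le2 A1 le1 g
     \<and> (\<forall>x\<in>A1. g (h x) = x) \<and> (\<forall>y\<in>A2. h (g y) = y))"

definition clopenin :: "'a topology \<Rightarrow> 'a set \<Rightarrow> bool" where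
  "clopenin T U \<longleftrightarrow> closedin T U \<and> openin T U"

definition upset :: "'a topology \<Rightarrow> ('a \<Rightarrow> 'a \<Rightarrow> bool) \<Rightarrow> 'a set \<Rightarrow> bool" where
  "upset T le U \<longleftrightarrow> U \<subseteq> topspace T \<and> (\<forall>x\<in>U. \<forall>y\<in>topspace T. le x y \<longrightarrow> y \<in> U)"

definition downclosure :: "'a topology \<Rightarrow> ('a \<Rightarrow> 'a \<Rightarrow> bool) \<Rightarrow> 'a set \<Rightarrow> 'a set" where
  "downclosure T le S = {y \<in> topspace T. \<exists>x\<in>S. le y x}"

definition stone_space :: "'a topology \<Rightarrow> bool" where
  "stone_space T \<longleftrightarrow> compact_space T \<and> Hausdorff_space T
     \<and> (\<forall>U. openin T U \<longrightarrow> (\<forall>x\<in>U. \<exists>C. clopenin T C \<and> x \<in> C \<and> C \<subseteq> U))"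

definition priestley_space :: "'a topology \<Rightarrow> ('a \<Rightarrow> 'a \<Rightarrow> bool) \<Rightarrow> bool" where
  "priestley_space T le \<longleftrightarrow> stone_space T \<and> poset_on (topspace T) le
     \<and> (\<forall>x\<in>topspace T. \<forall>y\<in>topspace T. \<not> le x y \<longrightarrow>
          (\<exists>U. clopenin T U \<and> upset T le U \<and> x \<in> U \<and> y \<notin> U))"

definition ClopUp :: "'a topology \<Rightarrow> ('a \<Rightarrow> 'a \<Rightarrow> bool) \<Rightarrow> 'a set set" where
  "ClopUp T le = {U. clopenin T U \<and> upset T le U}"

definition L_space :: "'a topology \<Rightarrow> ('a \<Rightarrow> 'a \<Rightarrow> bool) \<Rightarrow> bool" where
  "L_space T le \<longleftrightarrow> priestley_space T le
     \<and> (\<forall>U. clopenin T U \<longrightarrow> clopenin T (downclosure T le U))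
     \<and> (\<forall>U. openin T U \<and> upset T le U \<longrightarrow> openin T (T closure_of U))"

definition L_morphism :: "'a topology \<Rightarrow> ('a \<Rightarrow> 'a \<Rightarrow> bool) \<Rightarrow> 'b topology \<Rightarrow> ('b \<Rightarrow> 'b \<Rightarrow> bool)
    \<Rightarrow> ('a \<Rightarrow> 'b) \<Rightarrow> bool" where
  "L_morphism T1 le1 T2 le2 f \<longleftrightarrow> continuous_map T1 T2 f
     \<and> (\<forall>x\<in>topspace T1. \<forall>y\<in>topspace T1. le1 x y \<longrightarrow> le2 (f x) (f y))
     \<and> (\<forall>U. openin T2 U \<and> upset T2 le2 U \<longrightarrow>
          {x \<in> topspace T1. f x \<in> T2 closure_of U} = T1 closure_of {x \<in> topspace T1. f x \<in> U})"

definition spatial_part :: "'a topology \<Rightarrow> ('a \<Rightarrow> 'a \<Rightarrow> bool) \<Rightarrow> 'a set" where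
  "spatial_part T le = {y \<in> topspace T. clopenin T (downclosure T le {y})}"

definition minimals :: "('a \<Rightarrow> 'a \<Rightarrow> bool) \<Rightarrow> 'a set \<Rightarrow> 'a set" where
  "minimals le F = {x \<in> F. \<forall>y\<in>F. le y x \<longrightarrow> y = x}"

definition scott_upset :: "'a topology \<Rightarrow> ('a \<Rightarrow> 'a \<Rightarrow> bool) \<Rightarrow> 'a set \<Rightarrow> bool" where
  "scott_upset T le F \<longleftrightarrow> closedin T F \<and> upset T le F \<and> minimals le F \<subseteq> spatial_part T le"

definition ClopSUp :: "'a topology \<Rightarrow> ('a \<Rightarrow> 'a \<Rightarrow> bool) \<Rightarrow> 'a set set" where
  "ClopSUp T le = {V. clopenin T V \<and> scott_upset T le V}"

definition core :: "'a topology \<Rightarrow> ('a \<Rightarrow> 'a \<Rightarrow> bool) \<Rightarrow> 'a set \<Rightarrow> 'a set" where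
  "core T le U = \<Union> {V \<in> ClopSUp T le. V \<subseteq> U}"

text \<open>core U dense in U (both inside X; core U is contained in U and U is closed).\<close>
definition algebraic_L_space :: "'a topology \<Rightarrow> ('a \<Rightarrow> 'a \<Rightarrow> bool) \<Rightarrow> bool" where
  "algebraic_L_space T le \<longleftrightarrow> L_space T le
     \<and> (\<forall>U \<in> ClopUp T le. U \<subseteq> T closure_of (core T le U))"

definition coherent_L_morphism :: "'a topology \<Rightarrow> ('a \<Rightarrow> 'a \<Rightarrow> bool) \<Rightarrow> 'b topology \<Rightarrow> ('b \<Rightarrow> 'b \<Rightarrow> bool)
    \<Rightarrow> ('a \<Rightarrow> 'b) \<Rightarrow> bool" where
  "coherent_L_morphism T1 le1 T2 le2 f \<longleftrightarrow> L_morphism T1 le1 T2 le2 f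
     \<and> (\<forall>U \<in> ClopUp T2 le2. {x \<in> topspace T1. f x \<in> core T2 le2 U}
            \<subseteq> core T1 le1 {x \<in> topspace T1. f x \<in> U})"

end

theory Submission
  imports Defs
begin

text \<open>
  In an L-space \<open>X\<close> the clopen upsets
  form a frame whose joins are closures of unions. A clopen upset is compact in this frame iff it is
  a Scott upset: its minimal points have clopen downsets, so a cover of its closure already covers
  it, and conversely density of the core writes a compact clopen upset as a finite union of clopen
  Scott upsets. Hence \<open>ClopUp X\<close> is algebraic, and coherence of L-morphisms matches coherence of
  frame homomorphisms. A frame homomorphism \<open>h\<close> comes from a unique point map, because the
  clopen upsets \<open>U\<close> with \<open>x \<in> h U\<close> form a prime filter, which by compactness is the neighbourhood
  filter of a point. Finally an algebraic frame \<open>A\<close> is recovered from its space of prime filters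
  with the Priestley topology: it is an L-space (the downset of \<open>phi a - phi b\<close> is the complement
  of \<open>phi (a \<rightarrow> b)\<close>), \<open>phi\<close> identifies \<open>A\<close> with its clopen upsets, and for compact \<open>k\<close> every
  minimal prime filter containing \<open>k\<close> is completely prime, so \<open>phi k\<close> is a Scott upset.
\<close>

section \<open>Frames\<close>

lemma lub_unique: "poset_on A le \<Longrightarrow> is_lub A le S x \<Longrightarrow> is_lub A le S y \<Longrightarrow> x = y"
  unfolding poset_on_def is_lub_def by blast

lemma fjoin_eqI: "poset_on A le \<Longrightarrow> is_lub A le S x \<Longrightarrow> fjoin A le S = x"
  unfolding fjoin_def by (blast intro: the_equality lub_unique)

lemma glb_unique: "poset_on A le \<Longrightarrow> is_glb A le S x \<Longrightarrow> is_glb A le S y \<Longrightarrow> x = y"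
  unfolding poset_on_def is_glb_def by blast

lemma fmeet_eqI: "poset_on A le \<Longrightarrow> is_glb A le {a, b} x \<Longrightarrow> fmeet A le a b = x"
  unfolding fmeet_def by (blast intro: the_equality glb_unique)

lemma way_belowD:
  "way_below A le a b \<Longrightarrow> S \<subseteq> A \<Longrightarrow> le b (fjoin A le S) \<Longrightarrow> \<exists>T. T \<subseteq> S \<and> finite T \<and> le a (fjoin A le T)"
  unfolding way_below_def by blast

locale frame_lattice =
  fixes A :: "'a set" and le :: "'a \<Rightarrow> 'a \<Rightarrow> bool" (infix "\<sqsubseteq>" 50)
  assumes frame: "frame A le"
begin

abbreviation "join \<equiv> fjoin A le"
abbreviation "meet \<equiv> fmeet A le"

lemma poset: "poset_on A le"
  using frame unfolding frame_def by blast

lemma refl_le: "x \<in> A \<Longrightarrow> x \<sqsubseteq> x"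
  using poset unfolding poset_on_def by blast

lemma antisym_le: "x \<in> A \<Longrightarrow> y \<in> A \<Longrightarrow> x \<sqsubseteq> y \<Longrightarrow> y \<sqsubseteq> x \<Longrightarrow> x = y"
  using poset unfolding poset_on_def by blast

lemma trans_le: "x \<in> A \<Longrightarrow> y \<in> A \<Longrightarrow> z \<in> A \<Longrightarrow> x \<sqsubseteq> y \<Longrightarrow> y \<sqsubseteq> z \<Longrightarrow> x \<sqsubseteq> z"
  using poset unfolding poset_on_def by blast

lemma join_is_lub: "S \<subseteq> A \<Longrightarrow> is_lub A le S (join S)"
  using frame fjoin_eqI[OF poset] unfolding frame_def by metis

lemma join_closed: "S \<subseteq> A \<Longrightarrow> join S \<in> A"
  using join_is_lub unfolding is_lub_def by blast

lemma join_upper: "S \<subseteq> A \<Longrightarrow> s \<in> S \<Longrightarrow> s \<sqsubseteq> join S"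
  using join_is_lub unfolding is_lub_def by blast

lemma join_least: "S \<subseteq> A \<Longrightarrow> y \<in> A \<Longrightarrow> (\<And>s. s \<in> S \<Longrightarrow> s \<sqsubseteq> y) \<Longrightarrow> join S \<sqsubseteq> y"
  using join_is_lub unfolding is_lub_def by blast

lemma join_mono: "S \<subseteq> S' \<Longrightarrow> S' \<subseteq> A \<Longrightarrow> join S \<sqsubseteq> join S'"
  by (rule join_least) (auto intro: join_closed join_upper)

lemma meet_is_glb: "a \<in> A \<Longrightarrow> b \<in> A \<Longrightarrow> is_glb A le {a, b} (meet a b)"
proof -
  assume "a \<in> A" "b \<in> A"
  then have "is_glb A le {a, b} (join {c \<in> A. c \<sqsubseteq> a \<and> c \<sqsubseteq> b})"
    unfolding is_glb_def by (auto intro!: join_closed join_least join_upper)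
  then show ?thesis
    using fmeet_eqI[OF poset] by metis
qed

lemma meet_closed: "a \<in> A \<Longrightarrow> b \<in> A \<Longrightarrow> meet a b \<in> A"
  using meet_is_glb unfolding is_glb_def by blast

lemma meet_le1: "a \<in> A \<Longrightarrow> b \<in> A \<Longrightarrow> meet a b \<sqsubseteq> a"
  using meet_is_glb unfolding is_glb_def by blast

lemma meet_le2: "a \<in> A \<Longrightarrow> b \<in> A \<Longrightarrow> meet a b \<sqsubseteq> b"
  using meet_is_glb unfolding is_glb_def by blast

lemma meet_greatest: "a \<in> A \<Longrightarrow> b \<in> A \<Longrightarrow> c \<in> A \<Longrightarrow> c \<sqsubseteq> a \<Longrightarrow> c \<sqsubseteq> b \<Longrightarrow> c \<sqsubseteq> meet a b"
  using meet_is_glb unfolding is_glb_def by blast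

lemma meet_commute: "meet a b = meet b a"
  unfolding fmeet_def by (simp add: insert_commute)

lemma le_iff_meet: "a \<in> A \<Longrightarrow> b \<in> A \<Longrightarrow> a \<sqsubseteq> b \<longleftrightarrow> meet a b = a"
  by (metis meet_greatest meet_closed meet_le1 meet_le2 antisym_le refl_le)

lemma meet_mono:
  "a \<in> A \<Longrightarrow> b \<in> A \<Longrightarrow> c \<in> A \<Longrightarrow> d \<in> A \<Longrightarrow> a \<sqsubseteq> c \<Longrightarrow> b \<sqsubseteq> d \<Longrightarrow> meet a b \<sqsubseteq> meet c d"
  by (meson meet_greatest meet_closed meet_le1 meet_le2 trans_le)

lemma meet_join_distrib: "a \<in> A \<Longrightarrow> S \<subseteq> A \<Longrightarrow> meet a (join S) = join ((\<lambda>s. meet a s) ` S)"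
  using frame unfolding frame_def by blast

lemma top_closed: "ftop A le \<in> A"
  unfolding ftop_def by (simp add: join_closed)

lemma le_top: "x \<in> A \<Longrightarrow> x \<sqsubseteq> ftop A le"
  unfolding ftop_def by (simp add: join_upper)

definition fbot :: 'a where
  "fbot = join {}"

lemma bot_closed: "fbot \<in> A"
  unfolding fbot_def by (simp add: join_closed)

lemma bot_le: "x \<in> A \<Longrightarrow> fbot \<sqsubseteq> x"
  unfolding fbot_def by (rule join_least) auto

definition fsup :: "'a \<Rightarrow> 'a \<Rightarrow> 'a" where
  "fsup a b = join {a, b}"

lemma sup_closed: "a \<in> A \<Longrightarrow> b \<in> A \<Longrightarrow> fsup a b \<in> A"
  unfolding fsup_def by (simp add: join_closed)

lemma sup_upper1: "a \<in> A \<Longrightarrow> b \<in> A \<Longrightarrow> a \<sqsubseteq> fsup a b"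
  unfolding fsup_def by (simp add: join_upper)

lemma sup_upper2: "a \<in> A \<Longrightarrow> b \<in> A \<Longrightarrow> b \<sqsubseteq> fsup a b"
  unfolding fsup_def by (simp add: join_upper)

lemma sup_least: "a \<in> A \<Longrightarrow> b \<in> A \<Longrightarrow> c \<in> A \<Longrightarrow> a \<sqsubseteq> c \<Longrightarrow> b \<sqsubseteq> c \<Longrightarrow> fsup a b \<sqsubseteq> c"
  unfolding fsup_def by (rule join_least) auto

lemma sup_mono:
  "a \<in> A \<Longrightarrow> b \<in> A \<Longrightarrow> c \<in> A \<Longrightarrow> d \<in> A \<Longrightarrow> a \<sqsubseteq> c \<Longrightarrow> b \<sqsubseteq> d \<Longrightarrow> fsup a b \<sqsubseteq> fsup c d"
  by (meson sup_least sup_closed sup_upper1 sup_upper2 trans_le)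

lemma meet_sup_distrib: "a \<in> A \<Longrightarrow> b \<in> A \<Longrightarrow> c \<in> A \<Longrightarrow> meet a (fsup b c) = fsup (meet a b) (meet a c)"
  unfolding fsup_def using meet_join_distrib[of a "{b, c}"] by simp

lemma join_insert: "t \<in> A \<Longrightarrow> S \<subseteq> A \<Longrightarrow> join (insert t S) = fsup t (join S)"
proof (rule fjoin_eqI[OF poset])
  assume t: "t \<in> A" and S: "S \<subseteq> A"
  have "s \<sqsubseteq> fsup t (join S)" if "s \<in> S" for s
    using that t S by (meson join_closed join_upper sup_closed sup_upper2 trans_le subsetD)
  then show "is_lub A le (insert t S) (fsup t (join S))"
    using t S unfolding is_lub_def
    by (auto intro!: sup_closed join_closed sup_upper1 sup_least join_least)
qed

definition finf :: "'a set \<Rightarrow> 'a" where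
  "finf S = join {x \<in> A. \<forall>s\<in>S. x \<sqsubseteq> s}"

lemma finf_closed: "finf S \<in> A"
  unfolding finf_def by (rule join_closed) auto

lemma finf_lower: "S \<subseteq> A \<Longrightarrow> s \<in> S \<Longrightarrow> finf S \<sqsubseteq> s"
  unfolding finf_def by (rule join_least) auto

lemma finf_greatest: "S \<subseteq> A \<Longrightarrow> x \<in> A \<Longrightarrow> (\<And>s. s \<in> S \<Longrightarrow> x \<sqsubseteq> s) \<Longrightarrow> x \<sqsubseteq> finf S"
  unfolding finf_def by (rule join_upper) auto

lemma finf_antimono: "S \<subseteq> S' \<Longrightarrow> S' \<subseteq> A \<Longrightarrow> finf S' \<sqsubseteq> finf S"
  by (meson finf_greatest finf_closed finf_lower dual_order.trans subsetD)

definition fimp :: "'a \<Rightarrow> 'a \<Rightarrow> 'a" where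
  "fimp a b = join {c \<in> A. meet c a \<sqsubseteq> b}"

lemma fimp_closed: "fimp a b \<in> A"
  unfolding fimp_def by (rule join_closed) auto

lemma le_fimpI: "c \<in> A \<Longrightarrow> meet c a \<sqsubseteq> b \<Longrightarrow> c \<sqsubseteq> fimp a b"
  unfolding fimp_def by (rule join_upper) auto

lemma meet_fimp_le: "a \<in> A \<Longrightarrow> b \<in> A \<Longrightarrow> meet (fimp a b) a \<sqsubseteq> b"
proof -
  assume a: "a \<in> A" and b: "b \<in> A"
  let ?S = "{c \<in> A. meet c a \<sqsubseteq> b}"
  have "meet (fimp a b) a = join ((\<lambda>s. meet a s) ` ?S)"
    unfolding fimp_def using a by (subst meet_commute) (intro meet_join_distrib, auto)
  also have "\<dots> \<sqsubseteq> b"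
    using a b by (intro join_least) (auto simp: meet_commute intro: meet_closed)
  finally show ?thesis .
qed

subsection \<open>Filters, ideals and the prime filter theorem\<close>

definition lattice_filter :: "'a set \<Rightarrow> bool" where
  "lattice_filter F \<longleftrightarrow> F \<subseteq> A \<and> F \<noteq> {} \<and> (\<forall>x\<in>F. \<forall>y\<in>A. x \<sqsubseteq> y \<longrightarrow> y \<in> F)
     \<and> (\<forall>x\<in>F. \<forall>y\<in>F. meet x y \<in> F)"

definition lattice_ideal :: "'a set \<Rightarrow> bool" where
  "lattice_ideal I \<longleftrightarrow> I \<subseteq> A \<and> I \<noteq> {} \<and> (\<forall>x\<in>I. \<forall>y\<in>A. y \<sqsubseteq> x \<longrightarrow> y \<in> I)
     \<and> (\<forall>x\<in>I. \<forall>y\<in>I. fsup x y \<in> I)"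

definition prime_filter :: "'a set \<Rightarrow> bool" where
  "prime_filter P \<longleftrightarrow> lattice_filter P \<and> fbot \<notin> P
     \<and> (\<forall>x\<in>A. \<forall>y\<in>A. fsup x y \<in> P \<longrightarrow> x \<in> P \<or> y \<in> P)"

lemma principal_filter: "a \<in> A \<Longrightarrow> lattice_filter {y \<in> A. a \<sqsubseteq> y}"
  unfolding lattice_filter_def by (auto intro: refl_le trans_le meet_greatest meet_closed)

lemma principal_ideal: "b \<in> A \<Longrightarrow> lattice_ideal {y \<in> A. y \<sqsubseteq> b}"
  unfolding lattice_ideal_def by (auto intro: refl_le trans_le sup_least sup_closed)

lemma filter_generated_by_finite_subsets:
  assumes "B \<subseteq> A"
  shows "lattice_filter {x \<in> A. \<exists>S. finite S \<and> S \<subseteq> B \<and> finf S \<sqsubseteq> x}"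
  unfolding lattice_filter_def
proof (intro conjI ballI impI)
  have "finf {} \<sqsubseteq> ftop A le"
    using le_top finf_closed by blast
  then show "{x \<in> A. \<exists>S. finite S \<and> S \<subseteq> B \<and> finf S \<sqsubseteq> x} \<noteq> {}"
    using top_closed by blast
  show "y \<in> {x \<in> A. \<exists>S. finite S \<and> S \<subseteq> B \<and> finf S \<sqsubseteq> x}"
    if "x \<in> {x \<in> A. \<exists>S. finite S \<and> S \<subseteq> B \<and> finf S \<sqsubseteq> x}" "y \<in> A" "x \<sqsubseteq> y" for x y
    using that by (blast intro: trans_le[OF finf_closed])
  show "meet x y \<in> {x \<in> A. \<exists>S. finite S \<and> S \<subseteq> B \<and> finf S \<sqsubseteq> x}"
    if xy: "x \<in> {x \<in> A. \<exists>S. finite S \<and> S \<subseteq> B \<and> finf S \<sqsubseteq> x}"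
       "y \<in> {x \<in> A. \<exists>S. finite S \<and> S \<subseteq> B \<and> finf S \<sqsubseteq> x}" for x y
  proof -
    obtain S1 S2 where S: "finite S1" "S1 \<subseteq> B" "finf S1 \<sqsubseteq> x" "finite S2" "S2 \<subseteq> B" "finf S2 \<sqsubseteq> y"
      and xy: "x \<in> A" "y \<in> A"
      using xy by blast
    have U: "S1 \<union> S2 \<subseteq> A"
      using S assms by auto
    have "finf (S1 \<union> S2) \<sqsubseteq> finf S1" "finf (S1 \<union> S2) \<sqsubseteq> finf S2"
      using finf_antimono[OF _ U] by auto
    then have "finf (S1 \<union> S2) \<sqsubseteq> x" "finf (S1 \<union> S2) \<sqsubseteq> y"
      using S xy trans_le[OF finf_closed finf_closed] by blast+
    then have "finf (S1 \<union> S2) \<sqsubseteq> meet x y"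
      using meet_greatest finf_closed xy by blast
    then show ?thesis
      using S xy meet_closed by blast
  qed
qed auto

lemma ideal_generated_by_finite_subsets:
  assumes "B \<subseteq> A"
  shows "lattice_ideal {x \<in> A. \<exists>S. finite S \<and> S \<subseteq> B \<and> x \<sqsubseteq> join S}"
  unfolding lattice_ideal_def
proof (intro conjI ballI impI)
  show "{x \<in> A. \<exists>S. finite S \<and> S \<subseteq> B \<and> x \<sqsubseteq> join S} \<noteq> {}"
    using bot_closed refl_le unfolding fbot_def by blast
  show "y \<in> {x \<in> A. \<exists>S. finite S \<and> S \<subseteq> B \<and> x \<sqsubseteq> join S}"
    if xy: "x \<in> {x \<in> A. \<exists>S. finite S \<and> S \<subseteq> B \<and> x \<sqsubseteq> join S}" "y \<in> A" "y \<sqsubseteq> x" for x y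
  proof -
    obtain S where S: "finite S" "S \<subseteq> B" "x \<sqsubseteq> join S" "x \<in> A"
      using xy(1) by blast
    then have "y \<sqsubseteq> join S"
      using trans_le[OF xy(2) S(4) join_closed xy(3) S(3)] assms by blast
    then show ?thesis
      using S xy(2) by blast
  qed
  show "fsup x y \<in> {x \<in> A. \<exists>S. finite S \<and> S \<subseteq> B \<and> x \<sqsubseteq> join S}"
    if xy: "x \<in> {x \<in> A. \<exists>S. finite S \<and> S \<subseteq> B \<and> x \<sqsubseteq> join S}"
       "y \<in> {x \<in> A. \<exists>S. finite S \<and> S \<subseteq> B \<and> x \<sqsubseteq> join S}" for x y
  proof -
    obtain S1 S2 where S: "finite S1" "S1 \<subseteq> B" "x \<sqsubseteq> join S1" "finite S2" "S2 \<subseteq> B" "y \<sqsubseteq> join S2"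
      and xy: "x \<in> A" "y \<in> A"
      using xy by blast
    have U: "S1 \<union> S2 \<subseteq> A" "S1 \<subseteq> A" "S2 \<subseteq> A"
      using S assms by auto
    have "join S1 \<sqsubseteq> join (S1 \<union> S2)" "join S2 \<sqsubseteq> join (S1 \<union> S2)"
      using join_mono[OF _ U(1)] by auto
    then have "x \<sqsubseteq> join (S1 \<union> S2)" "y \<sqsubseteq> join (S1 \<union> S2)"
      using S xy U trans_le[OF _ join_closed join_closed] by blast+
    then have "fsup x y \<sqsubseteq> join (S1 \<union> S2)"
      using sup_least join_closed U xy by blast
    then show ?thesis
      using S xy sup_closed by blast
  qed
qed auto

lemma filter_generated_by_meets:
  assumes F: "lattice_filter F" and z: "z \<in> A"
  shows "lattice_filter {w \<in> A. \<exists>p\<in>F. meet p z \<sqsubseteq> w}"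
  unfolding lattice_filter_def
proof (intro conjI ballI impI)
  have FA: "F \<subseteq> A"
    using F unfolding lattice_filter_def by blast
  obtain p where "p \<in> F"
    using F unfolding lattice_filter_def by blast
  then have "meet p z \<in> {w \<in> A. \<exists>p\<in>F. meet p z \<sqsubseteq> w}"
    using FA z by (auto intro: meet_closed refl_le)
  then show "{w \<in> A. \<exists>p\<in>F. meet p z \<sqsubseteq> w} \<noteq> {}"
    by blast
  show "w' \<in> {w \<in> A. \<exists>p\<in>F. meet p z \<sqsubseteq> w}"
    if "w \<in> {w \<in> A. \<exists>p\<in>F. meet p z \<sqsubseteq> w}" "w' \<in> A" "w \<sqsubseteq> w'" for w w'
    using that FA z by (auto intro: trans_le meet_closed)
  show "meet w w' \<in> {w \<in> A. \<exists>p\<in>F. meet p z \<sqsubseteq> w}"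
    if ww: "w \<in> {w \<in> A. \<exists>p\<in>F. meet p z \<sqsubseteq> w}" "w' \<in> {w \<in> A. \<exists>p\<in>F. meet p z \<sqsubseteq> w}" for w w'
  proof -
    obtain p p' where p: "p \<in> F" "meet p z \<sqsubseteq> w" "w \<in> A" "p' \<in> F" "meet p' z \<sqsubseteq> w'" "w' \<in> A"
      using ww by blast
    have pA: "p \<in> A" "p' \<in> A"
      using p FA by auto
    have "meet (meet p p') z \<sqsubseteq> meet p z"
      using pA z by (intro meet_mono meet_closed meet_le1 refl_le) auto
    then have 1: "meet (meet p p') z \<sqsubseteq> w"
      using pA z p by (meson meet_closed trans_le)
    have "meet (meet p p') z \<sqsubseteq> meet p' z"
      using pA z by (intro meet_mono meet_closed meet_le2 refl_le) auto
    then have 2: "meet (meet p p') z \<sqsubseteq> w'"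
      using pA z p by (meson meet_closed trans_le)
    have "meet (meet p p') z \<sqsubseteq> meet w w'"
      using 1 2 pA z p by (intro meet_greatest meet_closed) auto
    moreover have "meet p p' \<in> F"
      using F p unfolding lattice_filter_def by blast
    ultimately show ?thesis
      using p by (auto intro: meet_closed)
  qed
qed auto

lemma maximal_disjoint_filter_exists:
  assumes G: "lattice_filter G" and I: "lattice_ideal I" and GI: "G \<inter> I = {}"
  shows "\<exists>P. lattice_filter P \<and> G \<subseteq> P \<and> P \<inter> I = {}
           \<and> (\<forall>F. lattice_filter F \<and> P \<subseteq> F \<and> F \<inter> I = {} \<longrightarrow> F = P)"
proof -
  define FF where "FF = {F. lattice_filter F \<and> G \<subseteq> F \<and> F \<inter> I = {}}"
  have "\<Union>C \<in> FF" if C: "C \<in> chains FF" "C \<noteq> {}" for C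
  proof -
    have CF: "C \<subseteq> FF" and ch: "\<forall>X\<in>C. \<forall>Y\<in>C. X \<subseteq> Y \<or> Y \<subseteq> X"
      using C unfolding chains_def chain_subset_def by auto
    have filters: "lattice_filter X" if "X \<in> C" for X
      using that CF unfolding FF_def by blast
    have "meet x y \<in> \<Union>C" if xy: "x \<in> X" "y \<in> Y" "X \<in> C" "Y \<in> C" for x y X Y
    proof -
      have "x \<in> Y \<and> y \<in> Y \<or> x \<in> X \<and> y \<in> X"
        using ch xy by blast
      then have "meet x y \<in> Y \<or> meet x y \<in> X"
        using filters[OF xy(3)] filters[OF xy(4)] unfolding lattice_filter_def by blast
      then show ?thesis
        using xy by blast
    qed
    moreover have "\<Union>C \<noteq> {}" "\<Union>C \<subseteq> A"
      using C(2) filters unfolding lattice_filter_def by blast+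
    moreover have "y \<in> \<Union>C" if "x \<in> \<Union>C" "y \<in> A" "x \<sqsubseteq> y" for x y
      using that filters unfolding lattice_filter_def by blast
    ultimately have "lattice_filter (\<Union>C)"
      unfolding lattice_filter_def by blast
    then show ?thesis
      using CF C(2) unfolding FF_def by blast
  qed
  moreover have "G \<in> FF"
    using G GI unfolding FF_def by blast
  ultimately have "\<exists>U\<in>FF. \<forall>X\<in>C. X \<subseteq> U" if "C \<in> chains FF" for C
    using that by (cases "C = {}") (blast, meson Union_upper)
  then have "\<exists>P\<in>FF. \<forall>X\<in>FF. P \<subseteq> X \<longrightarrow> X = P"
    by (rule Zorn_Lemma2[rule_format])
  then obtain P where P: "lattice_filter P" "G \<subseteq> P" "P \<inter> I = {}"
    and maximal: "\<And>F. lattice_filter F \<Longrightarrow> G \<subseteq> F \<Longrightarrow> F \<inter> I = {} \<Longrightarrow> P \<subseteq> F \<Longrightarrow> F = P"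
    unfolding FF_def by auto
  have "F = P" if "lattice_filter F" "P \<subseteq> F" "F \<inter> I = {}" for F
    using maximal[OF that(1) _ that(3,2)] P(2) that(2) by blast
  with P show ?thesis
    by blast
qed

lemma maximal_disjoint_filter_meets_ideal:
  assumes P: "lattice_filter P" and PI: "P \<inter> I = {}" and I: "lattice_ideal I"
    and maximal: "\<And>F. lattice_filter F \<Longrightarrow> P \<subseteq> F \<Longrightarrow> F \<inter> I = {} \<Longrightarrow> F = P"
    and z: "z \<in> A" "z \<notin> P"
  shows "\<exists>p\<in>P. meet p z \<in> I"
proof (rule ccontr)
  assume none: "\<not> (\<exists>p\<in>P. meet p z \<in> I)"
  define F where "F = {w \<in> A. \<exists>p\<in>P. meet p z \<sqsubseteq> w}"
  have PA: "P \<subseteq> A"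
    using P unfolding lattice_filter_def by blast
  have "F \<inter> I = {}"
    using none PA z I meet_closed unfolding F_def lattice_ideal_def by blast
  moreover have "P \<subseteq> F"
    unfolding F_def using PA z by (auto intro: meet_le1)
  ultimately have "F = P"
    using maximal filter_generated_by_meets[OF P z(1)] unfolding F_def by blast
  moreover obtain p where "p \<in> P"
    using P unfolding lattice_filter_def by blast
  then have "z \<in> F"
    unfolding F_def using z PA by (auto intro: meet_le2)
  ultimately show False
    using z by blast
qed

lemma maximal_disjoint_filter_prime:
  assumes P: "lattice_filter P" and PI: "P \<inter> I = {}" and I: "lattice_ideal I"
    and maximal: "\<And>F. lattice_filter F \<Longrightarrow> P \<subseteq> F \<Longrightarrow> F \<inter> I = {} \<Longrightarrow> F = P"
  shows "prime_filter P"
  unfolding prime_filter_def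
proof (intro conjI ballI impI)
  have PA: "P \<subseteq> A"
    using P unfolding lattice_filter_def by blast
  show "fbot \<notin> P"
    using I PI bot_le bot_closed unfolding lattice_ideal_def by blast
  show "x \<in> P \<or> y \<in> P" if xy: "x \<in> A" "y \<in> A" "fsup x y \<in> P" for x y
  proof (rule ccontr)
    assume "\<not> (x \<in> P \<or> y \<in> P)"
    then obtain p q where p: "p \<in> P" "meet p x \<in> I" and q: "q \<in> P" "meet q y \<in> I"
      using maximal_disjoint_filter_meets_ideal[OF P PI I maximal] xy by metis
    define r where "r = meet p q"
    have pq: "p \<in> A" "q \<in> A" "r \<in> A"
      using p q PA meet_closed unfolding r_def by auto
    have "meet r x \<in> I" "meet r y \<in> I"
      using I p(2) q(2) pq xy unfolding r_def lattice_ideal_def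
      by (meson meet_closed meet_le1 meet_le2 meet_mono refl_le)+
    then have "meet r (fsup x y) \<in> I"
      using meet_sup_distrib I pq xy unfolding lattice_ideal_def by simp
    moreover have "meet r (fsup x y) \<in> P"
      using P p q xy unfolding r_def lattice_filter_def by blast
    ultimately show False
      using PI by blast
  qed
qed (use P in blast)

theorem prime_filter_theorem:
  assumes "lattice_filter G" and "lattice_ideal I" and "G \<inter> I = {}"
  shows "\<exists>P. prime_filter P \<and> G \<subseteq> P \<and> P \<inter> I = {}"
  using maximal_disjoint_filter_exists[OF assms] maximal_disjoint_filter_prime[OF _ _ assms(2)]
  by metis

lemma prime_filter_separates:
  assumes a: "a \<in> A" and b: "b \<in> A" and ab: "\<not> a \<sqsubseteq> b"
  shows "\<exists>P. prime_filter P \<and> a \<in> P \<and> b \<notin> P"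
proof -
  have "{y \<in> A. a \<sqsubseteq> y} \<inter> {y \<in> A. y \<sqsubseteq> b} = {}"
    using ab a b by (auto intro: trans_le)
  then obtain P where "prime_filter P" "{y \<in> A. a \<sqsubseteq> y} \<subseteq> P" "P \<inter> {y \<in> A. y \<sqsubseteq> b} = {}"
    using prime_filter_theorem[OF principal_filter[OF a] principal_ideal[OF b]] by blast
  then show ?thesis
    using a b by (auto intro: refl_le)
qed

lemma prime_filter_subset: "prime_filter P \<Longrightarrow> P \<subseteq> A"
  unfolding prime_filter_def lattice_filter_def by blast

lemma prime_filter_upward: "prime_filter P \<Longrightarrow> x \<in> P \<Longrightarrow> y \<in> A \<Longrightarrow> x \<sqsubseteq> y \<Longrightarrow> y \<in> P"
  unfolding prime_filter_def lattice_filter_def by blast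

lemma prime_filter_top: "prime_filter P \<Longrightarrow> ftop A le \<in> P"
  unfolding prime_filter_def lattice_filter_def using le_top top_closed by blast

lemma prime_filter_bot: "prime_filter P \<Longrightarrow> fbot \<notin> P"
  unfolding prime_filter_def by blast

lemma prime_filter_meet_iff:
  "prime_filter P \<Longrightarrow> a \<in> A \<Longrightarrow> b \<in> A \<Longrightarrow> meet a b \<in> P \<longleftrightarrow> a \<in> P \<and> b \<in> P"
  unfolding prime_filter_def lattice_filter_def by (meson meet_closed meet_le1 meet_le2)

lemma prime_filter_sup_iff:
  "prime_filter P \<Longrightarrow> a \<in> A \<Longrightarrow> b \<in> A \<Longrightarrow> fsup a b \<in> P \<longleftrightarrow> a \<in> P \<or> b \<in> P"
  by (meson sup_closed sup_upper1 sup_upper2 prime_filter_def prime_filter_upward)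

lemma prime_filter_finf:
  assumes P: "prime_filter P"
  shows "finite S \<Longrightarrow> S \<subseteq> P \<Longrightarrow> finf S \<in> P"
proof (induction S rule: finite_induct)
  case empty
  have "finf {} = ftop A le"
    unfolding finf_def ftop_def by simp
  then show ?case
    using prime_filter_top P by simp
next
  case (insert t S)
  have tS: "insert t S \<subseteq> A"
    using insert prime_filter_subset P by blast
  have "meet t (finf S) \<sqsubseteq> finf (insert t S)"
    using tS by (intro finf_greatest)
      (auto intro: meet_closed finf_closed meet_le1 trans_le[OF _ _ _ meet_le2 finf_lower])
  moreover have "meet t (finf S) \<in> P"
    using insert prime_filter_meet_iff tS finf_closed P by auto
  ultimately show ?case
    using prime_filter_upward finf_closed P by blast
qed

lemma prime_filter_join_finite:
  assumes P: "prime_filter P"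
  shows "finite S \<Longrightarrow> S \<subseteq> A \<Longrightarrow> join S \<in> P \<Longrightarrow> \<exists>s\<in>S. s \<in> P"
proof (induction S rule: finite_induct)
  case empty
  then show ?case
    using prime_filter_bot P unfolding fbot_def by simp
next
  case (insert t S)
  then show ?case
    using join_insert prime_filter_sup_iff join_closed P by auto
qed

end

lemma
  assumes "frame_hom A1 le1 A2 le2 h"
  shows frame_hom_closed: "x \<in> A1 \<Longrightarrow> h x \<in> A2"
    and frame_hom_top: "h (ftop A1 le1) = ftop A2 le2"
    and frame_hom_meet: "a \<in> A1 \<Longrightarrow> b \<in> A1 \<Longrightarrow> h (fmeet A1 le1 a b) = fmeet A2 le2 (h a) (h b)"
    and frame_hom_join: "S \<subseteq> A1 \<Longrightarrow> h (fjoin A1 le1 S) = fjoin A2 le2 (h ` S)"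
  using assms unfolding frame_hom_def by blast+

lemma frame_hom_mono:
  assumes "frame A1 le1" "frame A2 le2" and h: "frame_hom A1 le1 A2 le2 h"
    and "x \<in> A1" "y \<in> A1" "le1 x y"
  shows "le2 (h x) (h y)"
proof -
  interpret B1: frame_lattice A1 le1 by (rule frame_lattice.intro) fact
  interpret B2: frame_lattice A2 le2 by (rule frame_lattice.intro) fact
  have "fmeet A1 le1 x y = x"
    using B1.le_iff_meet assms by blast
  then have "fmeet A2 le2 (h x) (h y) = h x"
    using frame_hom_meet[OF h] assms by metis
  then show ?thesis
    using B2.le_iff_meet frame_hom_closed[OF h] assms by blast
qed

lemma frame_hom_inverse:
  assumes F1: "frame A1 le1" and h: "frame_hom A1 le1 A2 le2 h"
    and gA: "\<And>y. y \<in> A2 \<Longrightarrow> g y \<in> A1" and gh: "\<And>x. x \<in> A1 \<Longrightarrow> g (h x) = x"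
    and hg: "\<And>y. y \<in> A2 \<Longrightarrow> h (g y) = y"
  shows "frame_hom A2 le2 A1 le1 g"
  unfolding frame_hom_def
proof (intro conjI ballI allI impI)
  interpret B1: frame_lattice A1 le1 by (rule frame_lattice.intro) fact
  show "g y \<in> A1" if "y \<in> A2" for y
    using gA that .
  show "g (ftop A2 le2) = ftop A1 le1"
    using frame_hom_top[OF h] gh B1.top_closed by metis
  fix a b assume a: "a \<in> A2" and b: "b \<in> A2"
  have "fmeet A2 le2 a b = h (fmeet A1 le1 (g a) (g b))"
    using frame_hom_meet[OF h] hg gA a b by simp
  then show "g (fmeet A2 le2 a b) = fmeet A1 le1 (g a) (g b)"
    using gh B1.meet_closed gA a b by simp
next
  interpret B1: frame_lattice A1 le1 by (rule frame_lattice.intro) fact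
  fix S assume S: "S \<subseteq> A2"
  have gS: "g ` S \<subseteq> A1"
    using gA S by blast
  have "h ` g ` S = S"
    using hg S by (force simp: image_image)
  then have "fjoin A2 le2 S = h (fjoin A1 le1 (g ` S))"
    using frame_hom_join[OF h gS] by simp
  then show "g (fjoin A2 le2 S) = fjoin A1 le1 (g ` S)"
    using gh B1.join_closed[OF gS] by simp
qed

lemma frame_iso_compact_elems:
  assumes F1: "frame A1 le1" and F2: "frame A2 le2" and h: "frame_hom A1 le1 A2 le2 h"
    and g: "frame_hom A2 le2 A1 le1 g" and gh: "\<And>x. x \<in> A1 \<Longrightarrow> g (h x) = x"
    and hg: "\<And>y. y \<in> A2 \<Longrightarrow> h (g y) = y"
    and a: "a \<in> compact_elems A1 le1"
  shows "h a \<in> compact_elems A2 le2"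
proof -
  interpret B1: frame_lattice A1 le1 by (rule frame_lattice.intro) fact
  interpret B2: frame_lattice A2 le2 by (rule frame_lattice.intro) fact
  have aA: "a \<in> A1" and wb: "way_below A1 le1 a a"
    using a unfolding compact_elems_def by auto
  have "\<exists>S'. S' \<subseteq> S \<and> finite S' \<and> le2 (h a) (fjoin A2 le2 S')"
    if S: "S \<subseteq> A2" and le: "le2 (h a) (fjoin A2 le2 S)" for S
  proof -
    have gS: "g ` S \<subseteq> A1"
      using frame_hom_closed[OF g] S by blast
    have "le1 (g (h a)) (g (fjoin A2 le2 S))"
      using frame_hom_mono[OF F2 F1 g frame_hom_closed[OF h aA] B2.join_closed[OF S] le] .
    then have "le1 a (fjoin A1 le1 (g ` S))"
      using gh[OF aA] frame_hom_join[OF g S] by simp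
    then obtain T where T: "T \<subseteq> g ` S" "finite T" "le1 a (fjoin A1 le1 T)"
      using way_belowD[OF wb gS] by blast
    have TA: "T \<subseteq> A1"
      using T(1) gS by blast
    have "le2 (h a) (h (fjoin A1 le1 T))"
      using frame_hom_mono[OF F1 F2 h aA B1.join_closed[OF TA] T(3)] .
    then have "le2 (h a) (fjoin A2 le2 (h ` T))"
      using frame_hom_join[OF h TA] by simp
    moreover have "h ` T \<subseteq> S"
    proof
      fix z assume "z \<in> h ` T"
      then obtain y where "y \<in> S" "z = h (g y)"
        using T(1) by blast
      then show "z \<in> S"
        using hg S by auto
    qed
    ultimately show ?thesis
      using T(2) by blast
  qed
  then have "way_below A2 le2 (h a) (h a)"
    unfolding way_below_def by blast
  then show ?thesis
    unfolding compact_elems_def using frame_hom_closed[OF h aA] by blast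
qed

section \<open>L-spaces and their frames of clopen upsets\<close>

lemma compact_space_closed_finite_subcover:
  assumes "compact_space T" "closedin T F" "\<And>U. U \<in> \<U> \<Longrightarrow> openin T U" "F \<subseteq> \<Union>\<U>"
  shows "\<exists>\<F>. finite \<F> \<and> \<F> \<subseteq> \<U> \<and> F \<subseteq> \<Union>\<F>"
  using closedin_compact_space[OF assms(1,2)] assms(3,4) unfolding compactin_def by blast

lemma clopenin_subset: "clopenin T C \<Longrightarrow> C \<subseteq> topspace T"
  unfolding clopenin_def by (simp add: openin_subset)

locale lspace =
  fixes T :: "'b topology" and le :: "'b \<Rightarrow> 'b \<Rightarrow> bool" (infix "\<preceq>" 50)
  assumes L_space: "L_space T le"
begin

abbreviation "X \<equiv> topspace T"
abbreviation "CU \<equiv> ClopUp T le"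

lemma priestley: "priestley_space T le"
  using L_space by (simp add: L_space_def)

lemma compact_X: "compact_space T"
  using priestley by (simp add: priestley_space_def stone_space_def)

lemma clopen_nbhd: "openin T U \<Longrightarrow> x \<in> U \<Longrightarrow> \<exists>C. clopenin T C \<and> x \<in> C \<and> C \<subseteq> U"
  using priestley unfolding priestley_space_def stone_space_def by blast

lemma ClopUp_separates: "x \<in> X \<Longrightarrow> y \<in> X \<Longrightarrow> \<not> x \<preceq> y \<Longrightarrow> \<exists>U\<in>CU. x \<in> U \<and> y \<notin> U"
  using priestley unfolding priestley_space_def ClopUp_def by blast

lemma refl_le: "x \<in> X \<Longrightarrow> x \<preceq> x"
  using priestley unfolding priestley_space_def poset_on_def by blast

lemma antisym_le: "x \<in> X \<Longrightarrow> y \<in> X \<Longrightarrow> x \<preceq> y \<Longrightarrow> y \<preceq> x \<Longrightarrow> x = y"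
  using priestley unfolding priestley_space_def poset_on_def by blast

lemma trans_le: "x \<in> X \<Longrightarrow> y \<in> X \<Longrightarrow> z \<in> X \<Longrightarrow> x \<preceq> y \<Longrightarrow> y \<preceq> z \<Longrightarrow> x \<preceq> z"
  using priestley unfolding priestley_space_def poset_on_def by blast

lemma downclosure_clopen: "clopenin T C \<Longrightarrow> clopenin T (downclosure T le C)"
  using L_space by (simp add: L_space_def)

lemma closure_open_upset_open: "openin T U \<Longrightarrow> upset T le U \<Longrightarrow> openin T (T closure_of U)"
  using L_space by (simp add: L_space_def)

lemma closed_finite_subcover:
  "closedin T F \<Longrightarrow> (\<And>U. U \<in> \<U> \<Longrightarrow> openin T U) \<Longrightarrow> F \<subseteq> \<Union>\<U> \<Longrightarrow> \<exists>\<F>. finite \<F> \<and> \<F> \<subseteq> \<U> \<and> F \<subseteq> \<Union>\<F>"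
  using compact_space_closed_finite_subcover[OF compact_X] .

lemma ClopUp_subset: "U \<in> CU \<Longrightarrow> U \<subseteq> X"
  unfolding ClopUp_def upset_def by blast

lemma ClopUp_open: "U \<in> CU \<Longrightarrow> openin T U"
  unfolding ClopUp_def clopenin_def by blast

lemma ClopUp_closed: "U \<in> CU \<Longrightarrow> closedin T U"
  unfolding ClopUp_def clopenin_def by blast

lemma ClopUp_compl_open: "U \<in> CU \<Longrightarrow> openin T (X - U)"
  using ClopUp_closed unfolding closedin_def by blast

lemma ClopUp_compl_closed: "U \<in> CU \<Longrightarrow> closedin T (X - U)"
  using ClopUp_open ClopUp_subset closedin_diff by blast

lemma ClopUp_upward: "U \<in> CU \<Longrightarrow> x \<in> U \<Longrightarrow> y \<in> X \<Longrightarrow> x \<preceq> y \<Longrightarrow> y \<in> U"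
  unfolding ClopUp_def upset_def by blast

lemma ClopUpI:
  "openin T U \<Longrightarrow> closedin T U \<Longrightarrow> U \<subseteq> X \<Longrightarrow> (\<And>x y. x \<in> U \<Longrightarrow> y \<in> X \<Longrightarrow> x \<preceq> y \<Longrightarrow> y \<in> U)
    \<Longrightarrow> U \<in> CU"
  unfolding ClopUp_def upset_def clopenin_def by blast

lemma ClopUp_Int: "U \<in> CU \<Longrightarrow> V \<in> CU \<Longrightarrow> U \<inter> V \<in> CU"
  unfolding ClopUp_def clopenin_def upset_def by auto

lemma ClopUp_Un: "U \<in> CU \<Longrightarrow> V \<in> CU \<Longrightarrow> U \<union> V \<in> CU"
  unfolding ClopUp_def clopenin_def upset_def by auto

lemma ClopUp_topspace: "X \<in> CU"
  unfolding ClopUp_def clopenin_def upset_def by auto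

lemma ClopUp_empty: "{} \<in> CU"
  unfolding ClopUp_def clopenin_def upset_def by auto

lemma ClopUp_Inter_finite: "finite F \<Longrightarrow> F \<subseteq> CU \<Longrightarrow> X \<inter> \<Inter>F \<in> CU"
proof (induction F rule: finite_induct)
  case (insert U F)
  then have "X \<inter> \<Inter>(insert U F) = U \<inter> (X \<inter> \<Inter>F)"
    using ClopUp_subset by blast
  then show ?case
    using insert ClopUp_Int by simp
qed (simp add: ClopUp_topspace)

lemma ClopUp_Union_finite: "finite F \<Longrightarrow> F \<subseteq> CU \<Longrightarrow> \<Union>F \<in> CU"
  by (induction F rule: finite_induct) (auto intro: ClopUp_empty ClopUp_Un)

lemma upset_closure:
  assumes U: "upset T le U"
  shows "upset T le (T closure_of U)"
  unfolding upset_def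
proof (intro conjI ballI impI)
  show "T closure_of U \<subseteq> X"
    by (rule closure_of_subset_topspace)
  fix x y assume x: "x \<in> T closure_of U" and y: "y \<in> X" and xy: "x \<preceq> y"
  show "y \<in> T closure_of U"
  proof (rule ccontr)
    assume "y \<notin> T closure_of U"
    then obtain W where W: "openin T W" "y \<in> W" "W \<inter> U = {}"
      using y unfolding in_closure_of by blast
    then obtain C where C: "clopenin T C" "y \<in> C" "C \<subseteq> W"
      using clopen_nbhd by blast
    have "x \<in> downclosure T le C"
      unfolding downclosure_def using x C xy by (auto simp: in_closure_of)
    moreover have "downclosure T le C \<inter> U = {}"
      using U C W clopenin_subset unfolding downclosure_def upset_def by blast
    ultimately show False
      using x downclosure_clopen[OF C(1)] unfolding in_closure_of clopenin_def by blast
  qed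
qed

lemma closure_Union_ClopUp: "S \<subseteq> CU \<Longrightarrow> T closure_of \<Union>S \<in> CU"
proof -
  assume S: "S \<subseteq> CU"
  have "openin T (\<Union>S)"
    using S ClopUp_open by blast
  moreover have "upset T le (\<Union>S)"
    using S unfolding ClopUp_def upset_def by blast
  ultimately show ?thesis
    unfolding ClopUp_def clopenin_def using closure_open_upset_open upset_closure by simp
qed

lemma ClopUp_lub: "S \<subseteq> CU \<Longrightarrow> is_lub CU (\<subseteq>) S (T closure_of \<Union>S)"
  unfolding is_lub_def
proof (intro conjI ballI impI)
  assume S: "S \<subseteq> CU"
  show "T closure_of \<Union>S \<in> CU"
    using closure_Union_ClopUp S by blast
  have "\<Union>S \<subseteq> X"
    using S ClopUp_subset by blast
  then show "s \<subseteq> T closure_of \<Union>S" if "s \<in> S" for s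
    using that closure_of_subset by blast
  show "T closure_of \<Union>S \<subseteq> y" if "y \<in> CU" "\<forall>s\<in>S. s \<subseteq> y" for y
    using that by (intro closure_of_minimal ClopUp_closed) auto
qed

lemma poset_ClopUp: "poset_on CU (\<subseteq>)"
  unfolding poset_on_def by blast

lemma fjoin_ClopUp: "S \<subseteq> CU \<Longrightarrow> fjoin CU (\<subseteq>) S = T closure_of \<Union>S"
  using fjoin_eqI[OF poset_ClopUp ClopUp_lub] by blast

lemma fmeet_ClopUp: "U \<in> CU \<Longrightarrow> V \<in> CU \<Longrightarrow> fmeet CU (\<subseteq>) U V = U \<inter> V"
  by (rule fmeet_eqI[OF poset_ClopUp]) (auto simp: is_glb_def ClopUp_Int)

lemma fjoin_ClopUp_finite:
  assumes "finite S" "S \<subseteq> CU"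
  shows "fjoin CU (\<subseteq>) S = \<Union>S"
proof -
  have "closedin T (\<Union>S)"
    using assms ClopUp_closed by (intro closedin_Union) auto
  then show ?thesis
    using fjoin_ClopUp[OF assms(2)] closure_of_closedin by simp
qed

lemma ftop_ClopUp: "ftop CU (\<subseteq>) = X"
proof -
  have "\<Union>CU = X"
    using ClopUp_topspace ClopUp_subset by blast
  then show ?thesis
    unfolding ftop_def using fjoin_ClopUp[of CU] by simp
qed

lemma frame_ClopUp: "frame CU (\<subseteq>)"
  unfolding frame_def
proof (intro conjI allI impI ballI)
  show "poset_on CU (\<subseteq>)"
    by (rule poset_ClopUp)
  show "\<exists>x. is_lub CU (\<subseteq>) S x" if "S \<subseteq> CU" for S
    using ClopUp_lub that by blast
  fix a S assume a: "a \<in> CU" and S: "S \<subseteq> CU"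
  have meets: "(\<lambda>s. fmeet CU (\<subseteq>) a s) ` S = (\<lambda>s. a \<inter> s) ` S"
    using S a fmeet_ClopUp by (simp add: subset_iff)
  have meets_ClopUp: "(\<lambda>s. a \<inter> s) ` S \<subseteq> CU"
    using S a ClopUp_Int by blast
  have "a \<inter> T closure_of \<Union>S = T closure_of (a \<inter> \<Union>S)"
  proof
    show "a \<inter> T closure_of \<Union>S \<subseteq> T closure_of (a \<inter> \<Union>S)"
      using openin_Int_closure_of_subset ClopUp_open a by blast
    show "T closure_of (a \<inter> \<Union>S) \<subseteq> a \<inter> T closure_of \<Union>S"
      using closure_of_mono[of "a \<inter> \<Union>S"] closure_of_closedin[OF ClopUp_closed[OF a]] by blast
  qed
  also have "a \<inter> \<Union>S = \<Union>((\<lambda>s. a \<inter> s) ` S)"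
    by blast
  finally show "fmeet CU (\<subseteq>) a (fjoin CU (\<subseteq>) S) = fjoin CU (\<subseteq>) ((\<lambda>s. fmeet CU (\<subseteq>) a s) ` S)"
    using fmeet_ClopUp fjoin_ClopUp closure_Union_ClopUp a S meets meets_ClopUp by simp
qed

lemma downclosure_point_closed:
  assumes x: "x \<in> X"
  shows "closedin T (downclosure T le {x})"
  unfolding closedin_def
proof
  show "downclosure T le {x} \<subseteq> X"
    unfolding downclosure_def by blast
  show "openin T (X - downclosure T le {x})"
  proof (rule openin_subopen[THEN iffD2], rule ballI)
    fix z assume z: "z \<in> X - downclosure T le {x}"
    then obtain U where U: "U \<in> CU" "z \<in> U" "x \<notin> U"
      using ClopUp_separates x unfolding downclosure_def by blast
    have "U \<subseteq> X - downclosure T le {x}"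
      using U ClopUp_subset[OF U(1)] ClopUp_upward[OF U(1) _ x] unfolding downclosure_def by blast
    then show "\<exists>T'. openin T T' \<and> z \<in> T' \<and> T' \<subseteq> X - downclosure T le {x}"
      using U ClopUp_open by blast
  qed
qed

lemma finite_chain_has_least:
  assumes "finite Z" "Z \<noteq> {}" "Z \<subseteq> X" "\<And>a b. a \<in> Z \<Longrightarrow> b \<in> Z \<Longrightarrow> a \<preceq> b \<or> b \<preceq> a"
  shows "\<exists>z0\<in>Z. \<forall>z\<in>Z. z0 \<preceq> z"
  using assms
proof (induction Z rule: finite_induct)
  case (insert a Z)
  show ?case
  proof (cases "Z = {}")
    case True
    then show ?thesis
      using insert.prems refl_le by auto
  next
    case False
    then obtain z0 where z0: "z0 \<in> Z" "\<forall>z\<in>Z. z0 \<preceq> z"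
      using insert by blast
    show ?thesis
    proof (cases "z0 \<preceq> a")
      case True
      then show ?thesis
        using z0 by blast
    next
      case False
      then have "a \<preceq> z0"
        using insert.prems(3) z0(1) by blast
      then have "\<forall>z\<in>insert a Z. a \<preceq> z"
        using z0 insert.prems(2) refl_le trans_le by (metis insertE insert_subset subsetD)
      then show ?thesis
        by blast
    qed
  qed
qed simp

text \<open>By compactness, since the closed sets \<open>F \<inter> \<down>z\<close> (\<open>z \<in> Z\<close>) have the finite intersection
  property: finite subchains have least elements.\<close>
lemma closed_chain_lower_bound:
  assumes F: "closedin T F" and Z: "Z \<subseteq> F" "Z \<noteq> {}"
    and chain: "\<And>a b. a \<in> Z \<Longrightarrow> b \<in> Z \<Longrightarrow> a \<preceq> b \<or> b \<preceq> a"
  shows "\<exists>m\<in>F. \<forall>z\<in>Z. m \<preceq> z"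
proof -
  have ZX: "Z \<subseteq> X"
    using Z F closedin_subset by blast
  define \<U> where "\<U> = (\<lambda>z. F \<inter> downclosure T le {z}) ` Z"
  have "\<Inter>\<U> \<noteq> {}"
  proof (rule compact_space_fip[THEN iffD1, OF compact_X, rule_format], intro conjI allI impI ballI)
    show "closedin T C" if "C \<in> \<U>" for C
      using that ZX F downclosure_point_closed unfolding \<U>_def by blast
    fix \<F> assume "finite \<F> \<and> \<F> \<subseteq> \<U>"
    then obtain Z' where Z': "Z' \<subseteq> Z" "finite Z'" "\<F> = (\<lambda>z. F \<inter> downclosure T le {z}) ` Z'"
      unfolding \<U>_def by (meson finite_subset_image)
    show "\<Inter>\<F> \<noteq> {}"
    proof (cases "Z' = {}")
      case False
      then obtain z0 where "z0 \<in> Z'" "\<forall>z\<in>Z'. z0 \<preceq> z"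
        using finite_chain_has_least[OF Z'(2)] Z'(1) ZX chain by blast
      then have "z0 \<in> \<Inter>\<F>"
        using Z' Z ZX unfolding downclosure_def by auto
      then show ?thesis
        by blast
    qed (use Z' in simp)
  qed
  then obtain m where "m \<in> \<Inter>\<U>"
    by blast
  then show ?thesis
    using Z(2) unfolding \<U>_def downclosure_def by blast
qed

lemma minimal_below:
  assumes F: "closedin T F" and y: "y \<in> F"
  shows "\<exists>m\<in>minimals le F. m \<preceq> y"
proof -
  define B where "B = {z \<in> F. z \<preceq> y}"
  have FX: "F \<subseteq> X"
    using F closedin_subset by blast
  have "partial_order_on B (relation_of (\<lambda>a b. b \<preceq> a) B)"
    using FX refl_le antisym_le trans_le unfolding B_def by (intro partial_order_on_relation_ofI) blast+
  moreover have "\<exists>u\<in>B. \<forall>a\<in>C. u \<preceq> a" if C: "C \<in> Chains (relation_of (\<lambda>a b. b \<preceq> a) B)" for C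
  proof (cases "C = {}")
    case True
    then show ?thesis
      using y FX refl_le unfolding B_def by blast
  next
    case False
    have CB: "C \<subseteq> B"
      using Chains_relation_of[OF C] .
    have "a \<preceq> b \<or> b \<preceq> a" if "a \<in> C" "b \<in> C" for a b
      using C that unfolding Chains_def relation_of_def by blast
    then obtain m where m: "m \<in> F" "\<forall>z\<in>C. m \<preceq> z"
      using closed_chain_lower_bound[OF F _ False] CB unfolding B_def by blast
    obtain z where "z \<in> C"
      using False by blast
    then have "m \<preceq> y"
      using m CB FX y trans_le[of m z y] unfolding B_def by blast
    then show ?thesis
      using m unfolding B_def by blast
  qed
  ultimately obtain m where m: "m \<in> B" and minimal: "\<forall>a\<in>B. a \<preceq> m \<longrightarrow> a = m"
    using predicate_Zorn[of B "\<lambda>a b. b \<preceq> a"] by blast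
  have "w = m" if "w \<in> F" "w \<preceq> m" for w
    using that m minimal FX trans_le[of w m y] y unfolding B_def by blast
  then show ?thesis
    using m unfolding B_def minimals_def by blast
qed

subsection \<open>Clopen Scott upsets\<close>

lemma ClopSUp_ClopUp: "V \<in> ClopSUp T le \<Longrightarrow> V \<in> CU"
  unfolding ClopSUp_def ClopUp_def scott_upset_def by blast

text \<open>Each point of a Scott upset lies above a minimal point \<open>m\<close>, whose clopen downset meets
  \<open>\<Union>S\<close> when \<open>m\<close> is in its closure; as the members of \<open>S\<close> are upsets, \<open>m \<in> \<Union>S\<close>.\<close>
lemma ClopSUp_subset_Union:
  assumes V: "V \<in> ClopSUp T le" and S: "S \<subseteq> CU" and VS: "V \<subseteq> T closure_of \<Union>S"
  shows "V \<subseteq> \<Union>S"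
proof
  fix y assume y: "y \<in> V"
  have "closedin T V"
    using V unfolding ClopSUp_def clopenin_def by blast
  then obtain m where m: "m \<in> minimals le V" "m \<preceq> y"
    using minimal_below y by blast
  then have mV: "m \<in> V" and "m \<in> spatial_part T le"
    using V unfolding ClopSUp_def scott_upset_def minimals_def by blast+
  then have down: "clopenin T (downclosure T le {m})" and mX: "m \<in> X"
    unfolding spatial_part_def by auto
  have "m \<in> downclosure T le {m}"
    unfolding downclosure_def using mX refl_le by blast
  moreover have "m \<in> T closure_of \<Union>S"
    using VS mV by blast
  ultimately obtain w where "w \<in> \<Union>S" "w \<in> downclosure T le {m}"
    using down unfolding in_closure_of clopenin_def by blast
  then obtain U where U: "U \<in> S" "w \<in> U" "w \<preceq> m"
    unfolding downclosure_def by blast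
  have "y \<in> X"
    using y ClopUp_subset[OF ClopSUp_ClopUp[OF V]] by blast
  then have "y \<in> U"
    using U S ClopUp_upward mX m(2) by blast
  then show "y \<in> \<Union>S"
    using U by blast
qed

lemma ClopSUp_compact:
  assumes V: "V \<in> ClopSUp T le"
  shows "V \<in> compact_elems CU (\<subseteq>)"
  unfolding compact_elems_def way_below_def
proof (intro CollectI conjI allI impI)
  show "V \<in> CU"
    using ClopSUp_ClopUp V by blast
  fix S assume S: "S \<subseteq> CU" and VS: "V \<subseteq> fjoin CU (\<subseteq>) S"
  have "V \<subseteq> \<Union>S"
    using ClopSUp_subset_Union[OF V S] VS fjoin_ClopUp[OF S] by simp
  then obtain F where F: "finite F" "F \<subseteq> S" "V \<subseteq> \<Union>F"
    using closed_finite_subcover[of V S] ClopUp_closed[OF ClopSUp_ClopUp[OF V]] S ClopUp_open by blast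
  moreover have "fjoin CU (\<subseteq>) F = \<Union>F"
    using fjoin_ClopUp_finite F S by blast
  ultimately show "\<exists>T'. T' \<subseteq> S \<and> finite T' \<and> V \<subseteq> fjoin CU (\<subseteq>) T'"
    by (intro exI[of _ F]) simp
qed

lemma ClopSUp_Un: "U \<in> ClopSUp T le \<Longrightarrow> V \<in> ClopSUp T le \<Longrightarrow> U \<union> V \<in> ClopSUp T le"
proof -
  assume UV: "U \<in> ClopSUp T le" "V \<in> ClopSUp T le"
  have "minimals le (U \<union> V) \<subseteq> minimals le U \<union> minimals le V"
    unfolding minimals_def by blast
  then have "minimals le (U \<union> V) \<subseteq> spatial_part T le"
    using UV unfolding ClopSUp_def scott_upset_def by blast
  moreover have "U \<union> V \<in> CU"
    using UV ClopSUp_ClopUp ClopUp_Un by blast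
  ultimately show ?thesis
    unfolding ClopSUp_def scott_upset_def ClopUp_def clopenin_def by blast
qed

lemma ClopSUp_Union_finite: "finite S \<Longrightarrow> S \<subseteq> ClopSUp T le \<Longrightarrow> \<Union>S \<in> ClopSUp T le"
proof (induction S rule: finite_induct)
  case empty
  show ?case
    unfolding ClopSUp_def scott_upset_def clopenin_def upset_def minimals_def by simp
qed (auto intro: ClopSUp_Un)

lemma ClopSUp_if_subset_core:
  assumes U: "U \<in> CU" and core: "U \<subseteq> core T le U"
  shows "U \<in> ClopSUp T le"
proof -
  have "U \<subseteq> \<Union>{V \<in> ClopSUp T le. V \<subseteq> U}"
    using core unfolding core_def .
  moreover have "\<And>V. V \<in> {V \<in> ClopSUp T le. V \<subseteq> U} \<Longrightarrow> openin T V"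
    using ClopSUp_ClopUp ClopUp_open by blast
  ultimately obtain F where F: "finite F" "F \<subseteq> {V \<in> ClopSUp T le. V \<subseteq> U}" "U \<subseteq> \<Union>F"
    using closed_finite_subcover[OF ClopUp_closed[OF U]] by meson
  have "U = \<Union>F"
    using F(2,3) by blast
  moreover have "\<Union>F \<in> ClopSUp T le"
    using F by (intro ClopSUp_Union_finite) auto
  ultimately show ?thesis
    by simp
qed

lemma ClopUp_separates_distinct:
  assumes "x \<in> X" "y \<in> X" "x \<noteq> y"
  shows "\<exists>U\<in>CU. (x \<in> U \<and> y \<notin> U) \<or> (y \<in> U \<and> x \<notin> U)"
  using assms ClopUp_separates antisym_le by metis

lemma ClopUp_points_eqI:
  assumes "x \<in> X" "y \<in> X" "\<And>U. U \<in> CU \<Longrightarrow> x \<in> U \<longleftrightarrow> y \<in> U"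
  shows "x = y"
  using ClopUp_separates_distinct assms by blast

lemma open_upset_eq_Union_ClopUp:
  assumes U: "openin T U" "upset T le U"
  shows "U = \<Union>{V \<in> CU. V \<subseteq> U}"
proof (intro subset_antisym subsetI)
  fix y assume y: "y \<in> U"
  have yX: "y \<in> X"
    using y U(2) unfolding upset_def by blast
  let ?G = "(\<lambda>V. X - V) ` {V \<in> CU. y \<in> V}"
  have "X - U \<subseteq> \<Union>?G"
  proof
    fix z assume z: "z \<in> X - U"
    then have "\<not> y \<preceq> z"
      using U(2) y unfolding upset_def by blast
    then show "z \<in> \<Union>?G"
      using ClopUp_separates yX z by blast
  qed
  moreover have "closedin T (X - U)"
    using U(1) by (simp add: closedin_diff)
  moreover have "\<And>N. N \<in> ?G \<Longrightarrow> openin T N"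
    using ClopUp_compl_open by blast
  ultimately obtain F' where "finite F'" "F' \<subseteq> ?G" "X - U \<subseteq> \<Union>F'"
    using closed_finite_subcover by meson
  then obtain F where F: "F \<subseteq> {V \<in> CU. y \<in> V}" "finite F" "X - U \<subseteq> \<Union>((\<lambda>V. X - V) ` F)"
    by (metis (no_types, lifting) finite_subset_image)
  have "X \<inter> \<Inter>F \<in> CU"
    using ClopUp_Inter_finite F(1,2) by blast
  moreover have "y \<in> X \<inter> \<Inter>F" "X \<inter> \<Inter>F \<subseteq> U"
    using F(1,3) yX by blast+
  ultimately show "y \<in> \<Union>{V \<in> CU. V \<subseteq> U}"
    by blast
qed blast

lemma ClopUp_point_finite_cover:
  assumes W: "openin T W" and y: "y \<in> W"
  shows "\<exists>F1 F2. finite F1 \<and> F1 \<subseteq> {U \<in> CU. y \<in> U} \<and> finite F2 \<and> F2 \<subseteq> {V \<in> CU. y \<notin> V}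
           \<and> X - W \<subseteq> \<Union>((\<lambda>U. X - U) ` F1) \<union> \<Union>F2"
proof -
  have yX: "y \<in> X"
    using W y openin_subset by blast
  let ?G1 = "{U \<in> CU. y \<in> U}" and ?G2 = "{V \<in> CU. y \<notin> V}"
  have "X - W \<subseteq> \<Union>((\<lambda>U. X - U) ` ?G1 \<union> ?G2)"
  proof
    fix z assume z: "z \<in> X - W"
    then obtain U where U: "U \<in> CU" "(y \<in> U \<and> z \<notin> U) \<or> (z \<in> U \<and> y \<notin> U)"
      using ClopUp_separates_distinct[of y z] yX y by blast
    then have "X - U \<in> (\<lambda>U. X - U) ` ?G1 \<and> z \<in> X - U \<or> U \<in> ?G2 \<and> z \<in> U"
      using z by blast
    then show "z \<in> \<Union>((\<lambda>U. X - U) ` ?G1 \<union> ?G2)"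
      by blast
  qed
  moreover have "closedin T (X - W)"
    using W by (simp add: closedin_diff)
  moreover have "\<And>N. N \<in> (\<lambda>U. X - U) ` ?G1 \<union> ?G2 \<Longrightarrow> openin T N"
    using ClopUp_compl_open ClopUp_open by blast
  ultimately obtain F where F: "finite F" "F \<subseteq> (\<lambda>U. X - U) ` ?G1 \<union> ?G2" "X - W \<subseteq> \<Union>F"
    using closed_finite_subcover by meson
  have "F \<inter> (\<lambda>U. X - U) ` ?G1 \<subseteq> (\<lambda>U. X - U) ` ?G1" "finite (F \<inter> (\<lambda>U. X - U) ` ?G1)"
    using F(1) by auto
  then obtain F1 where F1: "F1 \<subseteq> ?G1" "finite F1" "F \<inter> (\<lambda>U. X - U) ` ?G1 = (\<lambda>U. X - U) ` F1"
    by (metis (no_types, lifting) finite_subset_image)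
  have "X - W \<subseteq> \<Union>((\<lambda>U. X - U) ` F1) \<union> \<Union>(F \<inter> ?G2)"
  proof
    fix z assume "z \<in> X - W"
    then obtain N where N: "N \<in> F" "z \<in> N"
      using F(3) by blast
    show "z \<in> \<Union>((\<lambda>U. X - U) ` F1) \<union> \<Union>(F \<inter> ?G2)"
    proof (cases "N \<in> ?G2")
      case False
      then have "N \<in> (\<lambda>U. X - U) ` F1"
        using N(1) F(2) F1(3) by blast
      then show ?thesis
        using N(2) by blast
    qed (use N in blast)
  qed
  moreover have "finite (F \<inter> ?G2)" "F \<inter> ?G2 \<subseteq> ?G2"
    using F(1) by auto
  ultimately show ?thesis
    using F1(1,2) by blast
qed

lemma ClopUp_diff_nbhd:
  assumes W: "openin T W" and y: "y \<in> W"
  shows "\<exists>U\<in>CU. \<exists>V\<in>CU. y \<in> U \<and> y \<notin> V \<and> U - V \<subseteq> W"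
proof -
  obtain F1 F2 where F1: "finite F1" "F1 \<subseteq> {U \<in> CU. y \<in> U}" and F2: "finite F2" "F2 \<subseteq> {V \<in> CU. y \<notin> V}"
    and cover: "X - W \<subseteq> \<Union>((\<lambda>U. X - U) ` F1) \<union> \<Union>F2"
    using ClopUp_point_finite_cover[OF W y] by blast
  have "X \<inter> \<Inter>F1 \<in> CU" "\<Union>F2 \<in> CU"
    using ClopUp_Inter_finite ClopUp_Union_finite F1 F2 by auto
  moreover have "y \<in> X \<inter> \<Inter>F1" "y \<notin> \<Union>F2"
    using F1(2) F2(2) W y openin_subset by blast+
  moreover have "(X \<inter> \<Inter>F1) - \<Union>F2 \<subseteq> W"
  proof
    fix z assume z: "z \<in> (X \<inter> \<Inter>F1) - \<Union>F2"
    then have "z \<notin> \<Union>((\<lambda>U. X - U) ` F1) \<union> \<Union>F2"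
      by blast
    then show "z \<in> W"
      using cover z by blast
  qed
  ultimately show ?thesis
    by (intro bexI[of _ "X \<inter> \<Inter>F1"] bexI[of _ "\<Union>F2"]) auto
qed

context
  fixes F :: "'b set set"
  assumes FC: "F \<subseteq> CU" and XF: "X \<in> F" and empty: "{} \<notin> F"
    and Int: "\<And>U V. U \<in> F \<Longrightarrow> V \<in> F \<Longrightarrow> U \<inter> V \<in> F"
    and prime: "\<And>U V. U \<in> CU \<Longrightarrow> V \<in> CU \<Longrightarrow> U \<union> V \<in> F \<Longrightarrow> U \<in> F \<or> V \<in> F"
    and upward: "\<And>U V. U \<in> F \<Longrightarrow> V \<in> CU \<Longrightarrow> U \<subseteq> V \<Longrightarrow> V \<in> F"
begin

lemma prime_filter_Inter_finite: "finite F0 \<Longrightarrow> F0 \<subseteq> F \<Longrightarrow> X \<inter> \<Inter>F0 \<in> F"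
proof (induction F0 rule: finite_induct)
  case (insert U F0)
  then have "X \<inter> \<Inter>(insert U F0) = U \<inter> (X \<inter> \<Inter>F0)"
    using FC ClopUp_subset by blast
  then show ?case
    using insert Int by simp
qed (simp add: XF)

lemma prime_filter_Union_finite: "finite V0 \<Longrightarrow> V0 \<subseteq> CU - F \<Longrightarrow> \<Union>V0 \<notin> F"
proof (induction V0 rule: finite_induct)
  case (insert V V0)
  then have "\<Union>V0 \<in> CU"
    by (intro ClopUp_Union_finite) auto
  then show ?case
    using insert prime by auto
qed (simp add: empty)

lemma prime_filter_finite_intersection:
  assumes \<F>: "finite \<F>" "\<F> \<subseteq> F \<union> (\<lambda>V. X - V) ` (CU - F)"
  shows "\<Inter>\<F> \<noteq> {}"
proof -
  have "\<F> \<inter> (\<lambda>V. X - V) ` (CU - F) \<subseteq> (\<lambda>V. X - V) ` (CU - F)" "finite (\<F> \<inter> (\<lambda>V. X - V) ` (CU - F))"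
    using \<F> by auto
  then obtain V0 where V0: "V0 \<subseteq> CU - F" "finite V0" "\<F> \<inter> (\<lambda>V. X - V) ` (CU - F) = (\<lambda>V. X - V) ` V0"
    by (metis (no_types, lifting) finite_subset_image)
  have "X \<inter> \<Inter>(\<F> \<inter> F) \<in> F"
    using prime_filter_Inter_finite \<F>(1) by simp
  moreover have "\<Union>V0 \<in> CU" "\<Union>V0 \<notin> F"
    using ClopUp_Union_finite prime_filter_Union_finite V0 by auto
  ultimately have "\<not> X \<inter> \<Inter>(\<F> \<inter> F) \<subseteq> \<Union>V0"
    using upward by blast
  then obtain p where p: "p \<in> X \<inter> \<Inter>(\<F> \<inter> F)" "p \<notin> \<Union>V0"
    by blast
  have "p \<in> N" if N: "N \<in> \<F>" for N
  proof (cases "N \<in> F")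
    case True
    then show ?thesis
      using p N by blast
  next
    case False
    then have "N \<in> (\<lambda>V. X - V) ` V0"
      using N \<F>(2) V0(3) by blast
    then show ?thesis
      using p by blast
  qed
  then show ?thesis
    by blast
qed

text \<open>The assumptions on \<open>F\<close> say that it is a prime filter of the frame of clopen upsets. By
  compactness, its members together with the complements of its non-members have a common point.\<close>
lemma ClopUp_prime_filter_point: "\<exists>y\<in>X. \<forall>U\<in>CU. y \<in> U \<longleftrightarrow> U \<in> F"
proof -
  define \<U> where "\<U> = F \<union> (\<lambda>V. X - V) ` (CU - F)"
  have "\<Inter>\<U> \<noteq> {}"
  proof (rule compact_space_fip[THEN iffD1, OF compact_X, rule_format], intro conjI allI impI ballI)
    show "closedin T C" if "C \<in> \<U>" for C
      using that FC ClopUp_closed ClopUp_compl_closed unfolding \<U>_def by blast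
    show "\<Inter>\<F> \<noteq> {}" if "finite \<F> \<and> \<F> \<subseteq> \<U>" for \<F>
      using that prime_filter_finite_intersection unfolding \<U>_def by blast
  qed
  then obtain y where y: "y \<in> \<Inter>\<U>"
    by blast
  have "y \<in> U \<longleftrightarrow> U \<in> F" if U: "U \<in> CU" for U
  proof
    assume "y \<in> U"
    show "U \<in> F"
    proof (rule ccontr)
      assume "U \<notin> F"
      then have "X - U \<in> \<U>"
        using U unfolding \<U>_def by blast
      then show False
        using y \<open>y \<in> U\<close> by blast
    qed
  next
    assume "U \<in> F"
    then show "y \<in> U"
      using y unfolding \<U>_def by blast
  qed
  moreover have "y \<in> X"
    using y XF unfolding \<U>_def by blast
  ultimately show ?thesis
    by blast
qed

end

end

section \<open>Algebraic L-spaces\<close>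

locale algebraic_lspace = lspace +
  assumes core_dense: "\<forall>U \<in> ClopUp T le. U \<subseteq> T closure_of (core T le U)"
begin

text \<open>A compact clopen upset is the closure of the union of the clopen Scott upsets below it, hence
  a finite union of them.\<close>
lemma compact_elem_ClopSUp:
  assumes K: "K \<in> compact_elems CU (\<subseteq>)"
  shows "K \<in> ClopSUp T le"
proof -
  have KC: "K \<in> CU" and wb: "way_below CU (\<subseteq>) K K"
    using K unfolding compact_elems_def by auto
  define S where "S = {V \<in> ClopSUp T le. V \<subseteq> K}"
  have S: "S \<subseteq> CU"
    unfolding S_def using ClopSUp_ClopUp by blast
  have "K \<subseteq> fjoin CU (\<subseteq>) S"
    using core_dense KC fjoin_ClopUp[OF S] unfolding core_def S_def by simp
  then obtain F where F: "F \<subseteq> S" "finite F" "K \<subseteq> fjoin CU (\<subseteq>) F"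
    using way_belowD[OF wb S] by blast
  moreover have "fjoin CU (\<subseteq>) F = \<Union>F"
    using fjoin_ClopUp_finite F S by blast
  moreover have "\<Union>F \<subseteq> K"
    using F(1) unfolding S_def by blast
  ultimately have "K = \<Union>F"
    by blast
  moreover have "\<Union>F \<in> ClopSUp T le"
    using F unfolding S_def by (intro ClopSUp_Union_finite) auto
  ultimately show ?thesis
    by simp
qed

lemma compact_elems_ClopUp: "compact_elems CU (\<subseteq>) = ClopSUp T le"
  using compact_elem_ClopSUp ClopSUp_compact by blast

lemma algebraic_frame_ClopUp: "algebraic_frame CU (\<subseteq>)"
  unfolding algebraic_frame_def
proof (intro conjI ballI)
  show "frame CU (\<subseteq>)"
    by (rule frame_ClopUp)
  fix U assume U: "U \<in> CU"
  define Q where "Q = {b \<in> compact_elems CU (\<subseteq>). b \<subseteq> U}"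
  have Q: "Q \<subseteq> CU"
    unfolding Q_def compact_elems_def by blast
  have "core T le U = \<Union>Q"
    unfolding core_def Q_def compact_elems_ClopUp ..
  moreover have "U \<subseteq> T closure_of (core T le U)"
    using core_dense U by blast
  ultimately have "U \<subseteq> T closure_of \<Union>Q"
    by simp
  moreover have "T closure_of \<Union>Q \<subseteq> U"
    using ClopUp_closed[OF U] unfolding Q_def by (intro closure_of_minimal) auto
  ultimately show "U = fjoin CU (\<subseteq>) Q"
    using fjoin_ClopUp[OF Q] by simp
qed

end

lemma algebraic_lspaceI: "algebraic_L_space T le \<Longrightarrow> algebraic_lspace T le"
  unfolding algebraic_L_space_def algebraic_lspace_def lspace_def algebraic_lspace_axioms_def by blast

theorem algebraic_frame_ClopUp:
  "algebraic_L_space T le \<Longrightarrow> algebraic_frame (ClopUp T le) (\<subseteq>)"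
  using algebraic_lspace.algebraic_frame_ClopUp algebraic_lspaceI by blast

section \<open>Morphisms\<close>

locale lspace_pair = L1: lspace T1 le1 + L2: lspace T2 le2
  for T1 :: "'a topology" and le1 and T2 :: "'b topology" and le2
begin

lemma ClopUp_preimage:
  assumes f: "continuous_map T1 T2 f"
    and mono: "\<And>x y. x \<in> topspace T1 \<Longrightarrow> y \<in> topspace T1 \<Longrightarrow> le1 x y \<Longrightarrow> le2 (f x) (f y)"
    and U: "U \<in> ClopUp T2 le2"
  shows "{x \<in> topspace T1. f x \<in> U} \<in> ClopUp T1 le1"
proof (rule L1.ClopUpI)
  show "openin T1 {x \<in> topspace T1. f x \<in> U}"
    using openin_continuous_map_preimage[OF f L2.ClopUp_open[OF U]] .
  show "closedin T1 {x \<in> topspace T1. f x \<in> U}"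
    using closedin_continuous_map_preimage[OF f L2.ClopUp_closed[OF U]] .
  fix x y assume x: "x \<in> {x \<in> topspace T1. f x \<in> U}" and y: "y \<in> topspace T1" and "le1 x y"
  then have "le2 (f x) (f y)"
    using mono by blast
  moreover have "f y \<in> topspace T2"
    using continuous_map_image_subset_topspace[OF f] y by blast
  ultimately show "y \<in> {x \<in> topspace T1. f x \<in> U}"
    using L2.ClopUp_upward[OF U] x y by blast
qed blast

lemma frame_hom_preimage:
  assumes L: "L_morphism T1 le1 T2 le2 f"
  shows "frame_hom (ClopUp T2 le2) (\<subseteq>) (ClopUp T1 le1) (\<subseteq>) (\<lambda>U. {x \<in> topspace T1. f x \<in> U})"
    (is "frame_hom _ _ _ _ ?p")
proof -
  have f: "continuous_map T1 T2 f"
    and mono: "\<And>x y. x \<in> topspace T1 \<Longrightarrow> y \<in> topspace T1 \<Longrightarrow> le1 x y \<Longrightarrow> le2 (f x) (f y)"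
    and closure: "\<And>U. openin T2 U \<Longrightarrow> upset T2 le2 U \<Longrightarrow> ?p (T2 closure_of U) = T1 closure_of ?p U"
    using L unfolding L_morphism_def by blast+
  have pCU: "?p U \<in> ClopUp T1 le1" if "U \<in> ClopUp T2 le2" for U
    using ClopUp_preimage[OF f mono that] by blast
  have "?p (topspace T2) = topspace T1"
    using continuous_map_image_subset_topspace[OF f] by blast
  moreover have "?p (fmeet (ClopUp T2 le2) (\<subseteq>) U V) = fmeet (ClopUp T1 le1) (\<subseteq>) (?p U) (?p V)"
    if U: "U \<in> ClopUp T2 le2" and V: "V \<in> ClopUp T2 le2" for U V
  proof -
    have "?p (U \<inter> V) = ?p U \<inter> ?p V"
      by blast
    then show ?thesis
      using L2.fmeet_ClopUp[OF U V] L1.fmeet_ClopUp[OF pCU[OF U] pCU[OF V]] by simp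
  qed
  moreover have "?p (fjoin (ClopUp T2 le2) (\<subseteq>) S) = fjoin (ClopUp T1 le1) (\<subseteq>) (?p ` S)"
    if S: "S \<subseteq> ClopUp T2 le2" for S
  proof -
    have pS: "?p ` S \<subseteq> ClopUp T1 le1"
      using S pCU by blast
    have "openin T2 (\<Union>S)"
      using S L2.ClopUp_open by blast
    moreover have "upset T2 le2 (\<Union>S)"
      using S unfolding ClopUp_def upset_def by blast
    ultimately have "?p (T2 closure_of \<Union>S) = T1 closure_of ?p (\<Union>S)"
      by (rule closure)
    also have "?p (\<Union>S) = \<Union>(?p ` S)"
      by blast
    finally show ?thesis
      using L2.fjoin_ClopUp[OF S] L1.fjoin_ClopUp[OF pS] by simp
  qed
  ultimately show ?thesis
    unfolding frame_hom_def using pCU L1.ftop_ClopUp L2.ftop_ClopUp by simp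
qed

lemma
  assumes h: "frame_hom (ClopUp T2 le2) (\<subseteq>) (ClopUp T1 le1) (\<subseteq>) h"
  shows frame_hom_ClopUp_closed: "U \<in> ClopUp T2 le2 \<Longrightarrow> h U \<in> ClopUp T1 le1"
    and frame_hom_ClopUp_topspace: "h (topspace T2) = topspace T1"
    and frame_hom_ClopUp_Int: "U \<in> ClopUp T2 le2 \<Longrightarrow> V \<in> ClopUp T2 le2 \<Longrightarrow> h (U \<inter> V) = h U \<inter> h V"
    and frame_hom_ClopUp_closure_Union:
      "S \<subseteq> ClopUp T2 le2 \<Longrightarrow> h (T2 closure_of \<Union>S) = T1 closure_of \<Union>(h ` S)"
proof -
  show hCU: "h U \<in> ClopUp T1 le1" if "U \<in> ClopUp T2 le2" for U
    using frame_hom_closed[OF h that] .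
  show "h (topspace T2) = topspace T1"
    using frame_hom_top[OF h] L1.ftop_ClopUp L2.ftop_ClopUp by simp
  show "h (U \<inter> V) = h U \<inter> h V" if "U \<in> ClopUp T2 le2" "V \<in> ClopUp T2 le2" for U V
    using frame_hom_meet[OF h that] L2.fmeet_ClopUp[OF that] L1.fmeet_ClopUp[OF hCU hCU] that by simp
  show "h (T2 closure_of \<Union>S) = T1 closure_of \<Union>(h ` S)" if S: "S \<subseteq> ClopUp T2 le2" for S
  proof -
    have "h ` S \<subseteq> ClopUp T1 le1"
      using S hCU by blast
    then show ?thesis
      using frame_hom_join[OF h S] L2.fjoin_ClopUp[OF S] L1.fjoin_ClopUp by simp
  qed
qed

lemma frame_hom_ClopUp_empty:
  assumes h: "frame_hom (ClopUp T2 le2) (\<subseteq>) (ClopUp T1 le1) (\<subseteq>) h"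
  shows "h {} = {}"
  using frame_hom_ClopUp_closure_Union[OF h, of "{}"] by simp

lemma frame_hom_ClopUp_Un:
  assumes h: "frame_hom (ClopUp T2 le2) (\<subseteq>) (ClopUp T1 le1) (\<subseteq>) h"
    and U: "U \<in> ClopUp T2 le2" and V: "V \<in> ClopUp T2 le2"
  shows "h (U \<union> V) = h U \<union> h V"
proof -
  have "T2 closure_of \<Union>{U, V} = U \<union> V"
    using L2.ClopUp_closed[OF U] L2.ClopUp_closed[OF V] by (simp add: closure_of_closedin)
  moreover have "T1 closure_of \<Union>(h ` {U, V}) = h U \<union> h V"
    using L1.ClopUp_closed[OF frame_hom_ClopUp_closed[OF h U]] L1.ClopUp_closed[OF frame_hom_ClopUp_closed[OF h V]]
    by (simp add: closure_of_closedin)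
  ultimately show ?thesis
    using frame_hom_ClopUp_closure_Union[OF h, of "{U, V}"] U V by simp
qed

lemma frame_hom_ClopUp_mono:
  assumes h: "frame_hom (ClopUp T2 le2) (\<subseteq>) (ClopUp T1 le1) (\<subseteq>) h"
    and "U \<in> ClopUp T2 le2" "V \<in> ClopUp T2 le2" "U \<subseteq> V"
  shows "h U \<subseteq> h V"
proof -
  have "h U = h (U \<inter> V)"
    using assms(4) by (simp add: Int_absorb2)
  also have "\<dots> = h U \<inter> h V"
    by (rule frame_hom_ClopUp_Int[OF h assms(2,3)])
  finally show ?thesis
    by blast
qed

lemma frame_hom_point:
  assumes h: "frame_hom (ClopUp T2 le2) (\<subseteq>) (ClopUp T1 le1) (\<subseteq>) h" and x: "x \<in> topspace T1"
  shows "\<exists>y\<in>topspace T2. \<forall>U\<in>ClopUp T2 le2. y \<in> U \<longleftrightarrow> x \<in> h U"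
proof -
  have "\<exists>y\<in>topspace T2. \<forall>U\<in>ClopUp T2 le2. y \<in> U \<longleftrightarrow> U \<in> {U \<in> ClopUp T2 le2. x \<in> h U}"
  proof (rule L2.ClopUp_prime_filter_point)
    show "topspace T2 \<in> {U \<in> ClopUp T2 le2. x \<in> h U}"
      using L2.ClopUp_topspace frame_hom_ClopUp_topspace[OF h] x by simp
    show "{} \<notin> {U \<in> ClopUp T2 le2. x \<in> h U}"
      using frame_hom_ClopUp_empty[OF h] by simp
    show "U \<inter> V \<in> {U \<in> ClopUp T2 le2. x \<in> h U}"
      if "U \<in> {U \<in> ClopUp T2 le2. x \<in> h U}" "V \<in> {U \<in> ClopUp T2 le2. x \<in> h U}" for U V
      using that frame_hom_ClopUp_Int[OF h] L2.ClopUp_Int by simp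
    show "U \<in> {U \<in> ClopUp T2 le2. x \<in> h U} \<or> V \<in> {U \<in> ClopUp T2 le2. x \<in> h U}"
      if "U \<in> ClopUp T2 le2" "V \<in> ClopUp T2 le2" "U \<union> V \<in> {U \<in> ClopUp T2 le2. x \<in> h U}" for U V
      using that frame_hom_ClopUp_Un[OF h] by simp
    show "V \<in> {U \<in> ClopUp T2 le2. x \<in> h U}"
      if "U \<in> {U \<in> ClopUp T2 le2. x \<in> h U}" "V \<in> ClopUp T2 le2" "U \<subseteq> V" for U V
      using that frame_hom_ClopUp_mono[OF h] by blast
  qed blast
  then show ?thesis
    by simp
qed

context
  fixes h :: "'b set \<Rightarrow> 'a set" and f :: "'a \<Rightarrow> 'b"
  assumes h: "frame_hom (ClopUp T2 le2) (\<subseteq>) (ClopUp T1 le1) (\<subseteq>) h"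
    and fX: "\<And>x. x \<in> topspace T1 \<Longrightarrow> f x \<in> topspace T2"
    and fU: "\<And>x U. x \<in> topspace T1 \<Longrightarrow> U \<in> ClopUp T2 le2 \<Longrightarrow> f x \<in> U \<longleftrightarrow> x \<in> h U"
begin

lemma frame_hom_eq_point_preimage: "U \<in> ClopUp T2 le2 \<Longrightarrow> h U = {x \<in> topspace T1. f x \<in> U}"
  using L1.ClopUp_subset[OF frame_hom_ClopUp_closed[OF h]] fU by blast

lemma continuous_map_point_map: "continuous_map T1 T2 f"
proof -
  have "openin T1 {x \<in> topspace T1. f x \<in> W}" if W: "openin T2 W" for W
  proof (rule openin_subopen[THEN iffD2], rule ballI)
    fix x assume x: "x \<in> {x \<in> topspace T1. f x \<in> W}"
    then obtain U V where UV: "U \<in> ClopUp T2 le2" "V \<in> ClopUp T2 le2" "f x \<in> U" "f x \<notin> V" "U - V \<subseteq> W"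
      using L2.ClopUp_diff_nbhd[OF W] by blast
    have "openin T1 (h U - h V)"
      using frame_hom_ClopUp_closed[OF h] UV L1.ClopUp_open L1.ClopUp_closed by blast
    moreover have "x \<in> h U - h V"
      using fU x UV by blast
    moreover have "h U - h V \<subseteq> {x \<in> topspace T1. f x \<in> W}"
      using frame_hom_eq_point_preimage UV by blast
    ultimately show "\<exists>T'. openin T1 T' \<and> x \<in> T' \<and> T' \<subseteq> {x \<in> topspace T1. f x \<in> W}"
      by blast
  qed
  then show ?thesis
    unfolding continuous_map_def using fX by blast
qed

lemma L_morphism_point_map: "L_morphism T1 le1 T2 le2 f"
proof -
  have h_eq: "h U = {x \<in> topspace T1. f x \<in> U}" if "U \<in> ClopUp T2 le2" for U
    using frame_hom_eq_point_preimage that .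
  have "le2 (f x) (f y)" if xy: "x \<in> topspace T1" "y \<in> topspace T1" "le1 x y" for x y
  proof (rule ccontr)
    assume "\<not> le2 (f x) (f y)"
    then obtain U where U: "U \<in> ClopUp T2 le2" "f x \<in> U" "f y \<notin> U"
      using L2.ClopUp_separates[OF fX[OF xy(1)] fX[OF xy(2)]] by blast
    then have "y \<in> h U"
      using L1.ClopUp_upward[OF frame_hom_ClopUp_closed[OF h U(1)]] fU xy by blast
    then show False
      using fU xy U by blast
  qed
  moreover have "{x \<in> topspace T1. f x \<in> T2 closure_of U} = T1 closure_of {x \<in> topspace T1. f x \<in> U}"
    if U: "openin T2 U" "upset T2 le2 U" for U
  proof -
    define S where "S = {V \<in> ClopUp T2 le2. V \<subseteq> U}"
    have S: "S \<subseteq> ClopUp T2 le2" and U_eq: "U = \<Union>S"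
      unfolding S_def using L2.open_upset_eq_Union_ClopUp[OF U] by auto
    have "{x \<in> topspace T1. f x \<in> T2 closure_of U} = h (T2 closure_of \<Union>S)"
      using h_eq[OF L2.closure_Union_ClopUp[OF S]] U_eq by simp
    also have "\<dots> = T1 closure_of \<Union>(h ` S)"
      using frame_hom_ClopUp_closure_Union[OF h S] .
    also have "\<Union>(h ` S) = {x \<in> topspace T1. f x \<in> U}"
      using h_eq S U_eq by auto
    finally show ?thesis .
  qed
  ultimately show ?thesis
    unfolding L_morphism_def using continuous_map_point_map by blast
qed

end

lemma frame_hom_eq_preimage:
  assumes h: "frame_hom (ClopUp T2 le2) (\<subseteq>) (ClopUp T1 le1) (\<subseteq>) h"
  shows "\<exists>f. L_morphism T1 le1 T2 le2 f \<and> (\<forall>U \<in> ClopUp T2 le2. h U = {x \<in> topspace T1. f x \<in> U})"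
proof -
  define f where "f x = (SOME y. y \<in> topspace T2 \<and> (\<forall>U\<in>ClopUp T2 le2. y \<in> U \<longleftrightarrow> x \<in> h U))" for x
  have f: "f x \<in> topspace T2 \<and> (\<forall>U\<in>ClopUp T2 le2. f x \<in> U \<longleftrightarrow> x \<in> h U)" if "x \<in> topspace T1" for x
  proof -
    have "\<exists>y. y \<in> topspace T2 \<and> (\<forall>U\<in>ClopUp T2 le2. y \<in> U \<longleftrightarrow> x \<in> h U)"
      using frame_hom_point[OF h that] by blast
    then show ?thesis
      unfolding f_def by (rule someI_ex)
  qed
  then have fX: "\<And>x. x \<in> topspace T1 \<Longrightarrow> f x \<in> topspace T2"
    and fU: "\<And>x U. x \<in> topspace T1 \<Longrightarrow> U \<in> ClopUp T2 le2 \<Longrightarrow> f x \<in> U \<longleftrightarrow> x \<in> h U"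
    by blast+
  show ?thesis
    using L_morphism_point_map[OF h fX fU] frame_hom_eq_point_preimage[OF h fX fU] by blast
qed

end

locale algebraic_lspace_pair = A1: algebraic_lspace T1 le1 + A2: algebraic_lspace T2 le2
  for T1 :: "'a topology" and le1 and T2 :: "'b topology" and le2

sublocale algebraic_lspace_pair \<subseteq> lspace_pair
  by unfold_locales

lemma algebraic_lspace_pairI:
  "algebraic_L_space T1 le1 \<Longrightarrow> algebraic_L_space T2 le2 \<Longrightarrow> algebraic_lspace_pair T1 le1 T2 le2"
  by (simp add: algebraic_lspace_pair_def algebraic_lspaceI)

context algebraic_lspace_pair
begin

lemma preimage_compact_elem:
  assumes f: "coherent_L_morphism T1 le1 T2 le2 f" and K: "K \<in> compact_elems (ClopUp T2 le2) (\<subseteq>)"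
  shows "{x \<in> topspace T1. f x \<in> K} \<in> compact_elems (ClopUp T1 le1) (\<subseteq>)"
proof -
  let ?p = "\<lambda>U. {x \<in> topspace T1. f x \<in> U}"
  have KS: "K \<in> ClopSUp T2 le2"
    using K A2.compact_elems_ClopUp by blast
  have KC: "K \<in> ClopUp T2 le2"
    using A2.ClopSUp_ClopUp[OF KS] .
  have L: "L_morphism T1 le1 T2 le2 f"
    using f unfolding coherent_L_morphism_def by blast
  have "K \<subseteq> core T2 le2 K"
    unfolding core_def using KS by blast
  then have "?p K \<subseteq> ?p (core T2 le2 K)"
    by blast
  also have "\<dots> \<subseteq> core T1 le1 (?p K)"
    using f KC unfolding coherent_L_morphism_def by blast
  finally have "?p K \<in> ClopSUp T1 le1"
    using A1.ClopSUp_if_subset_core frame_hom_closed[OF frame_hom_preimage[OF L] KC] by blast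
  then show ?thesis
    using A1.compact_elems_ClopUp by blast
qed

lemma coherent_frame_hom_preimage:
  assumes "coherent_L_morphism T1 le1 T2 le2 f"
  shows "coherent_frame_hom (ClopUp T2 le2) (\<subseteq>) (ClopUp T1 le1) (\<subseteq>) (\<lambda>U. {x \<in> topspace T1. f x \<in> U})"
  using assms frame_hom_preimage preimage_compact_elem
  unfolding coherent_frame_hom_def coherent_L_morphism_def by blast

lemma coherent_L_morphism_from_coherent_frame_hom:
  assumes h: "coherent_frame_hom (ClopUp T2 le2) (\<subseteq>) (ClopUp T1 le1) (\<subseteq>) h"
    and f: "L_morphism T1 le1 T2 le2 f"
    and h_eq: "\<And>U. U \<in> ClopUp T2 le2 \<Longrightarrow> h U = {x \<in> topspace T1. f x \<in> U}"
  shows "coherent_L_morphism T1 le1 T2 le2 f"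
  unfolding coherent_L_morphism_def
proof (intro conjI ballI subsetI)
  fix U x assume U: "U \<in> ClopUp T2 le2" and x: "x \<in> {x \<in> topspace T1. f x \<in> core T2 le2 U}"
  then obtain V where V: "V \<in> ClopSUp T2 le2" "V \<subseteq> U" "f x \<in> V"
    unfolding core_def by blast
  have VC: "V \<in> ClopUp T2 le2"
    using A2.ClopSUp_ClopUp[OF V(1)] .
  have "h V \<in> ClopSUp T1 le1"
    using h V(1) A1.compact_elems_ClopUp A2.compact_elems_ClopUp unfolding coherent_frame_hom_def by blast
  moreover have "h V \<subseteq> {x \<in> topspace T1. f x \<in> U}" "x \<in> h V"
    using h_eq[OF VC] V(2,3) x by auto
  ultimately show "x \<in> core T1 le1 {x \<in> topspace T1. f x \<in> U}"
    unfolding core_def by blast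
qed (rule f)

end

theorem coherent_frame_hom_preimage_ClopUp:
  assumes "algebraic_L_space T1 le1" "algebraic_L_space T2 le2" "coherent_L_morphism T1 le1 T2 le2 f"
  shows "coherent_frame_hom (ClopUp T2 le2) (\<subseteq>) (ClopUp T1 le1) (\<subseteq>) (\<lambda>U. {x \<in> topspace T1. f x \<in> U})"
  using algebraic_lspace_pair.coherent_frame_hom_preimage[OF algebraic_lspace_pairI] assms by blast

theorem coherent_L_morphism_eqI:
  assumes "algebraic_L_space T2 le2"
    and "coherent_L_morphism T1 le1 T2 le2 f" "coherent_L_morphism T1 le1 T2 le2 g"
    and "\<forall>U \<in> ClopUp T2 le2. {x \<in> topspace T1. f x \<in> U} = {x \<in> topspace T1. g x \<in> U}"
    and "x \<in> topspace T1"
  shows "f x = g x"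
proof (rule lspace.ClopUp_points_eqI)
  show "lspace T2 le2"
    using assms(1) algebraic_lspaceI algebraic_lspace_def by blast
  have "continuous_map T1 T2 f" "continuous_map T1 T2 g"
    using assms(2,3) unfolding coherent_L_morphism_def L_morphism_def by blast+
  then show "f x \<in> topspace T2" "g x \<in> topspace T2"
    using assms(5) continuous_map_image_subset_topspace by blast+
  show "f x \<in> U \<longleftrightarrow> g x \<in> U" if "U \<in> ClopUp T2 le2" for U
    using assms(4,5) that by blast
qed

theorem coherent_frame_hom_eq_preimage:
  assumes "algebraic_L_space T1 le1" "algebraic_L_space T2 le2"
    and h: "coherent_frame_hom (ClopUp T2 le2) (\<subseteq>) (ClopUp T1 le1) (\<subseteq>) h"
  shows "\<exists>f. coherent_L_morphism T1 le1 T2 le2 f \<and> (\<forall>U \<in> ClopUp T2 le2. h U = {x \<in> topspace T1. f x \<in> U})"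
proof -
  interpret algebraic_lspace_pair T1 le1 T2 le2
    using algebraic_lspace_pairI assms(1,2) .
  obtain f where "L_morphism T1 le1 T2 le2 f" "\<forall>U \<in> ClopUp T2 le2. h U = {x \<in> topspace T1. f x \<in> U}"
    using frame_hom_eq_preimage h unfolding coherent_frame_hom_def by blast
  then show ?thesis
    using coherent_L_morphism_from_coherent_frame_hom[OF h] by blast
qed

section \<open>The prime filter space of a frame\<close>

context frame_lattice
begin

text \<open>The Priestley dual of the frame: prime filters, ordered by inclusion, with the topology
  generated by the sets \<open>phi a\<close> and their complements.\<close>

definition prime_filters :: "'a set set" where
  "prime_filters = {P. prime_filter P}"

definition phi :: "'a \<Rightarrow> 'a set set" where
  "phi a = {P \<in> prime_filters. a \<in> P}"

definition phi_subbasis :: "'a set set set" where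
  "phi_subbasis = phi ` A \<union> (\<lambda>a. prime_filters - phi a) ` A"

definition dual_space :: "'a set topology" where
  "dual_space = topology (arbitrary union_of (finite intersection_of (\<lambda>S. S \<in> phi_subbasis)
     relative_to prime_filters))"

lemma prime_filtersD: "P \<in> prime_filters \<Longrightarrow> prime_filter P"
  unfolding prime_filters_def by simp

lemma topspace_dual_space: "topspace dual_space = prime_filters"
  unfolding dual_space_def by simp

lemma openin_dual_space:
  "openin dual_space W \<longleftrightarrow>
     (arbitrary union_of (finite intersection_of (\<lambda>S. S \<in> phi_subbasis) relative_to prime_filters)) W"
  unfolding dual_space_def by (rule openin_subbase)

lemma phi_subset: "phi a \<subseteq> prime_filters"
  unfolding phi_def by blast

lemma phi_top: "phi (ftop A le) = prime_filters"
  unfolding phi_def using prime_filter_top prime_filtersD by blast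

lemma phi_bot: "phi fbot = {}"
  unfolding phi_def using prime_filter_bot prime_filtersD by blast

lemma phi_meet: "a \<in> A \<Longrightarrow> b \<in> A \<Longrightarrow> phi (meet a b) = phi a \<inter> phi b"
  unfolding phi_def using prime_filter_meet_iff prime_filtersD by blast

lemma phi_sup: "a \<in> A \<Longrightarrow> b \<in> A \<Longrightarrow> phi (fsup a b) = phi a \<union> phi b"
  unfolding phi_def using prime_filter_sup_iff prime_filtersD by blast

lemma phi_mono: "b \<in> A \<Longrightarrow> a \<sqsubseteq> b \<Longrightarrow> phi a \<subseteq> phi b"
  unfolding phi_def using prime_filter_upward prime_filtersD by blast

lemma le_if_phi_subset: "a \<in> A \<Longrightarrow> b \<in> A \<Longrightarrow> phi a \<subseteq> phi b \<Longrightarrow> a \<sqsubseteq> b"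
  unfolding phi_def prime_filters_def using prime_filter_separates by blast

lemma inj_on_phi: "inj_on phi A"
  unfolding inj_on_def by (metis antisym_le le_if_phi_subset subset_refl)

lemma subbasis_open: "S \<in> phi_subbasis \<Longrightarrow> openin dual_space S"
proof -
  assume S: "S \<in> phi_subbasis"
  have "S = prime_filters \<inter> S"
    using S phi_subset unfolding phi_subbasis_def by blast
  moreover have "((finite intersection_of (\<lambda>S. S \<in> phi_subbasis)) relative_to prime_filters) (prime_filters \<inter> S)"
    by (rule relative_to_inc, rule finite_intersection_of_inc) (rule S)
  ultimately show ?thesis
    unfolding openin_dual_space by (metis arbitrary_union_of_inc)
qed

lemma phi_open: "a \<in> A \<Longrightarrow> openin dual_space (phi a)"
  using subbasis_open unfolding phi_subbasis_def by blast

lemma phi_compl_open: "a \<in> A \<Longrightarrow> openin dual_space (prime_filters - phi a)"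
  using subbasis_open unfolding phi_subbasis_def by blast

lemma phi_closed: "a \<in> A \<Longrightarrow> closedin dual_space (phi a)"
  unfolding closedin_def topspace_dual_space using phi_compl_open phi_subset by blast

lemma phi_clopen: "a \<in> A \<Longrightarrow> clopenin dual_space (phi a)"
  unfolding clopenin_def using phi_open phi_closed by blast

lemma phi_diff_clopen:
  assumes a: "a \<in> A" and b: "b \<in> A"
  shows "clopenin dual_space (phi a - phi b)"
proof -
  have "prime_filters - (phi a - phi b) = (prime_filters - phi a) \<union> phi b"
    using phi_subset by blast
  moreover have "openin dual_space ((prime_filters - phi a) \<union> phi b)"
    using phi_compl_open[OF a] phi_open[OF b] by blast
  ultimately have "closedin dual_space (phi a - phi b)"
    unfolding closedin_def topspace_dual_space using phi_subset by auto
  moreover have "openin dual_space (phi a - phi b)"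
    using openin_diff phi_open phi_closed a b by blast
  ultimately show ?thesis
    unfolding clopenin_def by blast
qed

lemma Inter_subbasis_eq_phi_diff:
  "finite F \<Longrightarrow> F \<subseteq> phi_subbasis \<Longrightarrow> \<exists>a\<in>A. \<exists>b\<in>A. prime_filters \<inter> \<Inter>F = phi a - phi b"
proof (induction F rule: finite_induct)
  case empty
  have "prime_filters = phi (ftop A le) - phi fbot"
    using phi_top phi_bot by simp
  then show ?case
    using top_closed bot_closed by auto
next
  case (insert S F)
  then obtain a b where ab: "a \<in> A" "b \<in> A" "prime_filters \<inter> \<Inter>F = phi a - phi b"
    by blast
  have eq: "prime_filters \<inter> \<Inter>(insert S F) = S \<inter> (phi a - phi b)"
    using ab(3) by blast
  have "S \<in> phi_subbasis"
    using insert.prems by blast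
  then consider (pos) c where "c \<in> A" "S = phi c" | (neg) c where "c \<in> A" "S = prime_filters - phi c"
    unfolding phi_subbasis_def by blast
  then show ?case
  proof cases
    case pos
    then have "prime_filters \<inter> \<Inter>(insert S F) = phi (meet c a) - phi b"
      using eq phi_meet ab(1) by auto
    then show ?thesis
      using meet_closed pos(1) ab by blast
  next
    case neg
    have "(prime_filters - phi c) \<inter> (phi a - phi b) = phi a - phi (fsup b c)"
      using phi_sup[OF ab(2) neg(1)] phi_subset[of a] by blast
    then have "prime_filters \<inter> \<Inter>(insert S F) = phi a - phi (fsup b c)"
      using eq neg(2) by simp
    then show ?thesis
      using sup_closed neg(1) ab by blast
  qed
qed

lemma phi_diff_nbhd:
  assumes W: "openin dual_space W" and P: "P \<in> W"
  shows "\<exists>a\<in>A. \<exists>b\<in>A. P \<in> phi a - phi b \<and> phi a - phi b \<subseteq> W"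
proof -
  obtain \<U> where U: "\<U> \<subseteq> Collect (finite intersection_of (\<lambda>S. S \<in> phi_subbasis) relative_to prime_filters)"
    "\<Union>\<U> = W"
    using W unfolding openin_dual_space union_of_def by blast
  then obtain V where V: "V \<in> \<U>" "P \<in> V"
    using P by blast
  then obtain F where F: "finite F" "F \<subseteq> phi_subbasis" "prime_filters \<inter> \<Inter>F = V"
    using U unfolding relative_to_def intersection_of_def by auto
  then obtain a b where "a \<in> A" "b \<in> A" "prime_filters \<inter> \<Inter>F = phi a - phi b"
    using Inter_subbasis_eq_phi_diff[OF F(1,2)] by blast
  then show ?thesis
    using F V U by auto
qed

lemma phi_cover_if_finf_le_join:
  assumes S: "finite S" "S \<subseteq> A" and S': "finite S'" "S' \<subseteq> A" and le: "finf S' \<sqsubseteq> join S"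
  shows "prime_filters \<subseteq> \<Union>(phi ` S \<union> (\<lambda>b. prime_filters - phi b) ` S')"
proof
  fix P assume P: "P \<in> prime_filters"
  show "P \<in> \<Union>(phi ` S \<union> (\<lambda>b. prime_filters - phi b) ` S')"
  proof (cases "S' \<subseteq> P")
    case False
    then show ?thesis
      using P unfolding phi_def by blast
  next
    case True
    then have "join S \<in> P"
      using prime_filter_finf prime_filter_upward P S S' le join_closed prime_filtersD by blast
    then obtain s where "s \<in> S" "s \<in> P"
      using prime_filter_join_finite prime_filtersD P S by blast
    then show ?thesis
      using P unfolding phi_def by blast
  qed
qed

text \<open>Otherwise the filter generated by \<open>S'\<close> and the ideal generated by \<open>S\<close> would be disjoint,
  and a prime filter separating them would not be covered.\<close>
lemma subbasis_cover_finf_le_join: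
  assumes C: "C \<subseteq> phi_subbasis" and cover: "prime_filters \<subseteq> \<Union>C"
  defines "S \<equiv> {a \<in> A. phi a \<in> C}" and "S' \<equiv> {b \<in> A. prime_filters - phi b \<in> C}"
  shows "\<exists>T T'. finite T \<and> T \<subseteq> S \<and> finite T' \<and> T' \<subseteq> S' \<and> finf T' \<sqsubseteq> join T"
proof -
  define I where "I = {x \<in> A. \<exists>T. finite T \<and> T \<subseteq> S \<and> x \<sqsubseteq> join T}"
  define G where "G = {x \<in> A. \<exists>T. finite T \<and> T \<subseteq> S' \<and> finf T \<sqsubseteq> x}"
  have SA: "S \<subseteq> A" "S' \<subseteq> A"
    unfolding S_def S'_def by auto
  have "lattice_filter G" "lattice_ideal I"
    unfolding G_def I_def using filter_generated_by_finite_subsets ideal_generated_by_finite_subsets SA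
    by blast+
  have "G \<inter> I \<noteq> {}"
  proof
    assume "G \<inter> I = {}"
    then obtain P where P: "prime_filter P" "G \<subseteq> P" "P \<inter> I = {}"
      using prime_filter_theorem \<open>lattice_filter G\<close> \<open>lattice_ideal I\<close> by blast
    then obtain U where "U \<in> C" "P \<in> U"
      using cover unfolding prime_filters_def by blast
    then consider (pos) c where "c \<in> S" "c \<in> P" | (neg) c where "c \<in> S'" "c \<notin> P"
      using C unfolding phi_subbasis_def S_def S'_def phi_def by blast
    then show False
    proof cases
      case pos
      then have "c \<in> I"
        unfolding I_def using SA join_upper[of "{c}"] by blast
      then show False
        using pos P by blast
    next
      case neg
      then have "c \<in> G"
        unfolding G_def using SA finf_lower[of "{c}"] by blast
      then show False
        using neg P by blast
    qed
  qed
  then obtain x T T' where T: "finite T" "T \<subseteq> S" "x \<sqsubseteq> join T" and T': "finite T'" "T' \<subseteq> S'" "finf T' \<sqsubseteq> x"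
    and x: "x \<in> A"
    unfolding G_def I_def by blast
  have "finf T' \<sqsubseteq> join T"
    using trans_le[OF finf_closed x join_closed T'(3) T(3)] T(2) SA by blast
  then show ?thesis
    using T T' by blast
qed

lemma compact_dual_space: "compact_space dual_space"
proof (rule Alexander_subbase_alt[of prime_filters phi_subbasis])
  show "prime_filters \<subseteq> \<Union>phi_subbasis"
    using phi_top top_closed unfolding phi_subbasis_def by blast
  show "topology (arbitrary union_of (finite intersection_of (\<lambda>x. x \<in> phi_subbasis)
      relative_to prime_filters)) = dual_space"
    unfolding dual_space_def ..
  fix C assume C: "C \<subseteq> phi_subbasis" and cover: "prime_filters \<subseteq> \<Union>C"
  then obtain T T' where T: "finite T" "T \<subseteq> {a \<in> A. phi a \<in> C}"
    and T': "finite T'" "T' \<subseteq> {b \<in> A. prime_filters - phi b \<in> C}" and le: "finf T' \<sqsubseteq> join T"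
    using subbasis_cover_finf_le_join[OF C cover] by blast
  have TA: "T \<subseteq> A" "T' \<subseteq> A"
    using T(2) T'(2) by auto
  have "prime_filters \<subseteq> \<Union>(phi ` T \<union> (\<lambda>b. prime_filters - phi b) ` T')"
    using phi_cover_if_finf_le_join[OF T(1) TA(1) T'(1) TA(2) le] .
  moreover have "phi ` T \<union> (\<lambda>b. prime_filters - phi b) ` T' \<subseteq> C"
    using T(2) T'(2) by blast
  ultimately show "\<exists>C'. finite C' \<and> C' \<subseteq> C \<and> prime_filters \<subseteq> \<Union>C'"
    using T(1) T'(1) by (intro exI[of _ "phi ` T \<union> (\<lambda>b. prime_filters - phi b) ` T'"]) auto
qed

lemma phi_separates_closed:
  assumes K: "closedin dual_space K" and P: "P \<in> prime_filters" and nP: "\<And>R. R \<in> K \<Longrightarrow> \<not> P \<subseteq> R"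
  shows "\<exists>a\<in>A. P \<in> phi a \<and> phi a \<inter> K = {}"
proof -
  have pP: "prime_filter P"
    using prime_filtersD P .
  have PA: "P \<subseteq> A"
    using prime_filter_subset pP .
  have "K \<subseteq> \<Union>((\<lambda>a. prime_filters - phi a) ` P)"
  proof
    fix R assume R: "R \<in> K"
    then obtain a where a: "a \<in> P" "a \<notin> R"
      using nP by blast
    have "R \<in> prime_filters"
      using closedin_subset[OF K] R unfolding topspace_dual_space by blast
    then show "R \<in> \<Union>((\<lambda>a. prime_filters - phi a) ` P)"
      unfolding phi_def using a by blast
  qed
  moreover have "\<And>U. U \<in> (\<lambda>a. prime_filters - phi a) ` P \<Longrightarrow> openin dual_space U"
    using phi_compl_open PA by blast
  ultimately obtain F where F: "finite F" "F \<subseteq> (\<lambda>a. prime_filters - phi a) ` P" "K \<subseteq> \<Union>F"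
    using compact_space_closed_finite_subcover[OF compact_dual_space K] by meson
  then obtain T where T: "T \<subseteq> P" "finite T" "F = (\<lambda>a. prime_filters - phi a) ` T"
    by (meson finite_subset_image)
  have TA: "T \<subseteq> A"
    using T PA by blast
  have "False" if R: "R \<in> phi (finf T)" "R \<in> K" for R
  proof -
    obtain t where t: "t \<in> T" "R \<in> prime_filters - phi t"
      using R(2) F(3) unfolding T(3) by blast
    have "finf T \<in> R" "prime_filter R"
      using R unfolding phi_def prime_filters_def by auto
    then have "t \<in> R"
      using prime_filter_upward finf_lower[OF TA t(1)] TA t(1) by blast
    then show False
      using t unfolding phi_def by blast
  qed
  then show ?thesis
    using prime_filter_finf[OF pP T(2,1)] P finf_closed unfolding phi_def by blast
qed

lemma open_upset_eq_Union_phi: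
  assumes W: "openin dual_space W" and up: "\<And>P Q. P \<in> W \<Longrightarrow> Q \<in> prime_filters \<Longrightarrow> P \<subseteq> Q \<Longrightarrow> Q \<in> W"
  shows "W = \<Union>(phi ` {a \<in> A. phi a \<subseteq> W})"
proof (intro subset_antisym subsetI)
  fix P assume P: "P \<in> W"
  have PX: "P \<in> prime_filters"
    using openin_subset[OF W] P unfolding topspace_dual_space by blast
  have K: "closedin dual_space (prime_filters - W)"
    using W topspace_dual_space by (metis closedin_diff closedin_topspace)
  have "\<not> P \<subseteq> R" if "R \<in> prime_filters - W" for R
    using that up P by blast
  then obtain a where "a \<in> A" "P \<in> phi a" "phi a \<inter> (prime_filters - W) = {}"
    using phi_separates_closed[OF K PX] by blast
  then show "P \<in> \<Union>(phi ` {a \<in> A. phi a \<subseteq> W})"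
    using phi_subset by blast
qed blast

text \<open>A basic neighbourhood \<open>phi c - phi d\<close> of a point of \<open>phi (join S)\<close> meets some
  \<open>phi s\<close>, \<open>s \<in> S\<close>: otherwise \<open>meet c s \<sqsubseteq> d\<close> for all \<open>s\<close>, and distributivity gives
  \<open>meet c (join S) \<sqsubseteq> d\<close>.\<close>
lemma closure_Union_phi:
  assumes S: "S \<subseteq> A"
  shows "dual_space closure_of \<Union>(phi ` S) = phi (join S)"
proof
  show "dual_space closure_of \<Union>(phi ` S) \<subseteq> phi (join S)"
    using phi_mono join_closed[OF S] join_upper[OF S] phi_closed[OF join_closed[OF S]]
    by (intro closure_of_minimal) blast+
  show "phi (join S) \<subseteq> dual_space closure_of \<Union>(phi ` S)"
  proof
    fix P assume P: "P \<in> phi (join S)"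
    have PX: "P \<in> prime_filters" and JP: "join S \<in> P" and pP: "prime_filter P"
      using P prime_filtersD unfolding phi_def by auto
    have "\<exists>Q. Q \<in> \<Union>(phi ` S) \<and> Q \<in> W" if W: "P \<in> W" "openin dual_space W" for W
    proof -
      obtain c d where cd: "c \<in> A" "d \<in> A" "P \<in> phi c - phi d" "phi c - phi d \<subseteq> W"
        using phi_diff_nbhd W by blast
      have "\<exists>s\<in>S. \<not> meet c s \<sqsubseteq> d"
      proof (rule ccontr)
        assume "\<not> (\<exists>s\<in>S. \<not> meet c s \<sqsubseteq> d)"
        then have "join ((\<lambda>s. meet c s) ` S) \<sqsubseteq> d"
          using S cd by (intro join_least) (auto intro: meet_closed)
        then have "meet c (join S) \<sqsubseteq> d"
          using meet_join_distrib[OF cd(1) S] by simp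
        moreover have "meet c (join S) \<in> P"
          using prime_filter_meet_iff[OF pP cd(1) join_closed[OF S]] JP cd(3) unfolding phi_def by blast
        ultimately have "d \<in> P"
          using prime_filter_upward[OF pP _ cd(2)] by blast
        then show False
          using cd(3) PX unfolding phi_def by blast
      qed
      then obtain s where s: "s \<in> S" "\<not> meet c s \<sqsubseteq> d"
        by blast
      then obtain Q where Q: "prime_filter Q" "meet c s \<in> Q" "d \<notin> Q"
        using prime_filter_separates[OF meet_closed[OF cd(1)] cd(2)] S by blast
      then have "Q \<in> phi c - phi d" "Q \<in> phi s"
        using prime_filter_meet_iff[OF Q(1) cd(1)] s S unfolding phi_def prime_filters_def by auto
      then show ?thesis
        using cd(4) s(1) by blast
    qed
    then show "P \<in> dual_space closure_of \<Union>(phi ` S)"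
      unfolding in_closure_of topspace_dual_space using PX by blast
  qed
qed

subsection \<open>The prime filter space is an L-space\<close>

lemma prime_filter_extend_fimp:
  assumes R: "prime_filter R" and a: "a \<in> A" and b: "b \<in> A" and notin: "fimp a b \<notin> R"
  shows "\<exists>Q. prime_filter Q \<and> R \<subseteq> Q \<and> a \<in> Q \<and> b \<notin> Q"
proof -
  have RA: "R \<subseteq> A"
    using prime_filter_subset R .
  define G where "G = {w \<in> A. \<exists>r\<in>R. meet r a \<sqsubseteq> w}"
  have "lattice_filter G"
    unfolding G_def using filter_generated_by_meets[OF _ a] R unfolding prime_filter_def by blast
  moreover have "G \<inter> {y \<in> A. y \<sqsubseteq> b} = {}"
  proof -
    have False if w: "w \<in> A" "w \<sqsubseteq> b" and r: "r \<in> R" "meet r a \<sqsubseteq> w" for w r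
    proof -
      have "meet r a \<sqsubseteq> b"
        using trans_le[OF meet_closed w(1) b r(2) w(2)] a r(1) RA by blast
      then have "fimp a b \<in> R"
        using le_fimpI prime_filter_upward[OF R r(1) fimp_closed] r(1) RA by blast
      then show False
        using notin by blast
    qed
    then show ?thesis
      unfolding G_def by blast
  qed
  ultimately obtain Q where Q: "prime_filter Q" "G \<subseteq> Q" "Q \<inter> {y \<in> A. y \<sqsubseteq> b} = {}"
    using prime_filter_theorem[OF _ principal_ideal[OF b]] by blast
  have "R \<subseteq> G"
    unfolding G_def using RA a meet_le1 by blast
  moreover have "a \<in> G"
    unfolding G_def using prime_filter_top[OF R] meet_le2[OF top_closed a] a by blast
  ultimately show ?thesis
    using Q b refl_le by blast
qed

lemma downclosure_phi_diff:
  assumes a: "a \<in> A" and b: "b \<in> A"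
  shows "downclosure dual_space (\<subseteq>) (phi a - phi b) = prime_filters - phi (fimp a b)"
proof (intro subset_antisym subsetI)
  fix P assume "P \<in> downclosure dual_space (\<subseteq>) (phi a - phi b)"
  then obtain Q where Q: "prime_filter Q" "a \<in> Q" "b \<notin> Q" "P \<subseteq> Q" and P: "P \<in> prime_filters"
    unfolding downclosure_def topspace_dual_space phi_def prime_filters_def by blast
  have "fimp a b \<notin> Q"
    using prime_filter_meet_iff[OF Q(1) fimp_closed a] prime_filter_upward[OF Q(1) _ b meet_fimp_le[OF a b]]
      Q(2,3) by blast
  then show "P \<in> prime_filters - phi (fimp a b)"
    using P Q(4) unfolding phi_def by blast
next
  fix R assume "R \<in> prime_filters - phi (fimp a b)"
  then have R: "prime_filter R" "fimp a b \<notin> R" "R \<in> prime_filters"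
    unfolding phi_def prime_filters_def by auto
  then obtain Q where "prime_filter Q" "R \<subseteq> Q" "a \<in> Q" "b \<notin> Q"
    using prime_filter_extend_fimp a b by blast
  then show "R \<in> downclosure dual_space (\<subseteq>) (phi a - phi b)"
    using R(3) unfolding downclosure_def topspace_dual_space phi_def prime_filters_def by blast
qed

lemma downclosure_closed_dual_space:
  assumes C: "closedin dual_space C"
  shows "closedin dual_space (downclosure dual_space (\<subseteq>) C)"
proof -
  have CX: "C \<subseteq> prime_filters"
    using closedin_subset C topspace_dual_space by blast
  have "openin dual_space (prime_filters - downclosure dual_space (\<subseteq>) C)"
  proof (rule openin_subopen[THEN iffD2], rule ballI)
    fix Q assume Q: "Q \<in> prime_filters - downclosure dual_space (\<subseteq>) C"
    then have "\<not> Q \<subseteq> R" if "R \<in> C" for R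
      using that unfolding downclosure_def topspace_dual_space by blast
    then obtain a where a: "a \<in> A" "Q \<in> phi a" "phi a \<inter> C = {}"
      using phi_separates_closed[OF C] Q by blast
    have "phi a \<subseteq> prime_filters - downclosure dual_space (\<subseteq>) C"
      using a(3) phi_subset CX unfolding downclosure_def phi_def by blast
    then show "\<exists>U. openin dual_space U \<and> Q \<in> U \<and> U \<subseteq> prime_filters - downclosure dual_space (\<subseteq>) C"
      using phi_open[OF a(1)] a(2) by blast
  qed
  then show ?thesis
    unfolding closedin_def topspace_dual_space downclosure_def by simp
qed

lemma downclosure_clopen_dual_space:
  assumes C: "clopenin dual_space C"
  shows "clopenin dual_space (downclosure dual_space (\<subseteq>) C)"
proof -
  have "openin dual_space (downclosure dual_space (\<subseteq>) C)"
  proof (rule openin_subopen[THEN iffD2], rule ballI)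
    fix P assume "P \<in> downclosure dual_space (\<subseteq>) C"
    then obtain Q where Q: "Q \<in> C" "P \<subseteq> Q" and P: "P \<in> prime_filters"
      unfolding downclosure_def topspace_dual_space by blast
    obtain a b where ab: "a \<in> A" "b \<in> A" "Q \<in> phi a - phi b" "phi a - phi b \<subseteq> C"
      using phi_diff_nbhd[OF _ Q(1)] C unfolding clopenin_def by blast
    have "P \<in> downclosure dual_space (\<subseteq>) (phi a - phi b)"
      using P Q(2) ab(3) unfolding downclosure_def topspace_dual_space by blast
    moreover have "downclosure dual_space (\<subseteq>) (phi a - phi b) \<subseteq> downclosure dual_space (\<subseteq>) C"
      using ab(4) unfolding downclosure_def by blast
    ultimately show "\<exists>U. openin dual_space U \<and> P \<in> U \<and> U \<subseteq> downclosure dual_space (\<subseteq>) C"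
      using downclosure_phi_diff[OF ab(1,2)] phi_compl_open[OF fimp_closed] by metis
  qed
  then show ?thesis
    using downclosure_closed_dual_space C unfolding clopenin_def by blast
qed

lemma upset_phi: "upset dual_space (\<subseteq>) (phi a)"
  unfolding upset_def topspace_dual_space phi_def by blast

lemma closure_open_upset_dual_space:
  assumes W: "openin dual_space W" and up: "upset dual_space (\<subseteq>) W"
  shows "\<exists>a\<in>A. dual_space closure_of W = phi a"
proof -
  define S where "S = {a \<in> A. phi a \<subseteq> W}"
  have "W = \<Union>(phi ` S)"
    unfolding S_def using up by (intro open_upset_eq_Union_phi[OF W]) (auto simp: upset_def topspace_dual_space)
  then have "dual_space closure_of W = phi (join S)"
    using closure_Union_phi[of S] unfolding S_def by auto
  then show ?thesis
    using join_closed[of S] unfolding S_def by auto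
qed

lemma Hausdorff_dual_space: "Hausdorff_space dual_space"
  unfolding Hausdorff_space_def topspace_dual_space
proof (intro allI impI)
  fix P Q assume PQ: "P \<in> prime_filters \<and> Q \<in> prime_filters \<and> P \<noteq> Q"
  then obtain a where a: "a \<in> A" "(P \<in> phi a \<and> Q \<notin> phi a) \<or> (Q \<in> phi a \<and> P \<notin> phi a)"
    using prime_filtersD prime_filter_subset unfolding phi_def by blast
  moreover have "disjnt (phi a) (prime_filters - phi a)" "disjnt (prime_filters - phi a) (phi a)"
    unfolding disjnt_def by blast+
  ultimately show "\<exists>U V. openin dual_space U \<and> openin dual_space V \<and> P \<in> U \<and> Q \<in> V \<and> disjnt U V"
    using phi_open[OF a(1)] phi_compl_open[OF a(1)] PQ by blast
qed

lemma priestley_dual_space: "priestley_space dual_space (\<subseteq>)"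
  unfolding priestley_space_def stone_space_def
proof (intro conjI ballI impI allI)
  show "compact_space dual_space"
    by (rule compact_dual_space)
  show "Hausdorff_space dual_space"
    by (rule Hausdorff_dual_space)
  show "\<exists>C. clopenin dual_space C \<and> P \<in> C \<and> C \<subseteq> U" if "openin dual_space U" "P \<in> U" for U P
    using phi_diff_nbhd[OF that] phi_diff_clopen by blast
  show "poset_on (topspace dual_space) (\<subseteq>)"
    unfolding poset_on_def by blast
  fix P Q assume "P \<in> topspace dual_space" "Q \<in> topspace dual_space" "\<not> P \<subseteq> Q"
  then obtain a where "a \<in> A" "P \<in> phi a" "Q \<notin> phi a"
    using prime_filtersD prime_filter_subset unfolding topspace_dual_space phi_def by blast
  then show "\<exists>U. clopenin dual_space U \<and> upset dual_space (\<subseteq>) U \<and> P \<in> U \<and> Q \<notin> U"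
    using phi_clopen upset_phi by blast
qed

lemma L_space_dual_space: "L_space dual_space (\<subseteq>)"
  unfolding L_space_def using priestley_dual_space downclosure_clopen_dual_space
    closure_open_upset_dual_space phi_open by metis

lemma ClopUp_dual_space: "ClopUp dual_space (\<subseteq>) = phi ` A"
proof (intro subset_antisym subsetI)
  fix U assume "U \<in> ClopUp dual_space (\<subseteq>)"
  then have U: "openin dual_space U" "closedin dual_space U" "upset dual_space (\<subseteq>) U"
    unfolding ClopUp_def clopenin_def by auto
  obtain a where "a \<in> A" "dual_space closure_of U = phi a"
    using closure_open_upset_dual_space U(1,3) by blast
  then show "U \<in> phi ` A"
    using closure_of_closedin[OF U(2)] by auto
qed (auto simp: ClopUp_def phi_clopen upset_phi)

subsection \<open>Compact elements give clopen Scott upsets\<close>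

lemma ideal_below_sup_outside:
  assumes P: "prime_filter P" and p: "p \<in> A"
  shows "lattice_ideal {x \<in> A. \<exists>c\<in>A. c \<notin> P \<and> x \<sqsubseteq> fsup c p}"
  unfolding lattice_ideal_def
proof (intro conjI ballI impI)
  show "{x \<in> A. \<exists>c\<in>A. c \<notin> P \<and> x \<sqsubseteq> fsup c p} \<noteq> {}"
    using bot_closed prime_filter_bot[OF P] sup_upper1[OF bot_closed p] by blast
  show "y \<in> {x \<in> A. \<exists>c\<in>A. c \<notin> P \<and> x \<sqsubseteq> fsup c p}"
    if "x \<in> {x \<in> A. \<exists>c\<in>A. c \<notin> P \<and> x \<sqsubseteq> fsup c p}" "y \<in> A" "y \<sqsubseteq> x" for x y
    using that p by (blast intro: trans_le[OF _ _ sup_closed])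
  show "fsup x y \<in> {x \<in> A. \<exists>c\<in>A. c \<notin> P \<and> x \<sqsubseteq> fsup c p}"
    if xy: "x \<in> {x \<in> A. \<exists>c\<in>A. c \<notin> P \<and> x \<sqsubseteq> fsup c p}"
      "y \<in> {x \<in> A. \<exists>c\<in>A. c \<notin> P \<and> x \<sqsubseteq> fsup c p}" for x y
  proof -
    obtain c d where cd: "c \<in> A" "c \<notin> P" "x \<sqsubseteq> fsup c p" "d \<in> A" "d \<notin> P" "y \<sqsubseteq> fsup d p"
      and xyA: "x \<in> A" "y \<in> A"
      using xy by blast
    have cdA: "fsup c d \<in> A" and cdP: "fsup c d \<notin> P"
      using cd sup_closed prime_filter_sup_iff[OF P] by auto
    have "fsup c p \<sqsubseteq> fsup (fsup c d) p" "fsup d p \<sqsubseteq> fsup (fsup c d) p"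
      using cd p cdA by (intro sup_mono sup_upper1 sup_upper2 refl_le; simp)+
    then have "x \<sqsubseteq> fsup (fsup c d) p" "y \<sqsubseteq> fsup (fsup c d) p"
      using cd xyA p cdA by (meson sup_closed trans_le)+
    then have "fsup x y \<sqsubseteq> fsup (fsup c d) p"
      using sup_least xyA p cdA sup_closed by blast
    then show ?thesis
      using cdA cdP xyA sup_closed by blast
  qed
qed (use p in auto)

text \<open>Otherwise a prime filter containing \<open>k\<close> and missing the ideal of all \<open>x \<sqsubseteq> fsup c p\<close> with
  \<open>c \<notin> P\<close> would lie strictly below \<open>P\<close>.\<close>
lemma minimal_prime_filter_cover:
  assumes k: "k \<in> A" and P: "P \<in> minimals (\<subseteq>) (phi k)" and p: "p \<in> P"
  shows "\<exists>c\<in>A. c \<notin> P \<and> k \<sqsubseteq> fsup c p"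
proof (rule ccontr)
  assume none: "\<not> (\<exists>c\<in>A. c \<notin> P \<and> k \<sqsubseteq> fsup c p)"
  have Pk: "P \<in> phi k" and Pmin: "\<And>Q. Q \<in> phi k \<Longrightarrow> Q \<subseteq> P \<Longrightarrow> Q = P"
    using P unfolding minimals_def by auto
  have pP: "prime_filter P"
    using Pk prime_filtersD unfolding phi_def by blast
  have pA: "p \<in> A"
    using p prime_filter_subset[OF pP] by blast
  define I where "I = {x \<in> A. \<exists>c\<in>A. c \<notin> P \<and> x \<sqsubseteq> fsup c p}"
  have "{y \<in> A. k \<sqsubseteq> y} \<inter> I = {}"
    using none trans_le[OF k _ sup_closed] pA unfolding I_def by blast
  then obtain Q where Q: "prime_filter Q" "{y \<in> A. k \<sqsubseteq> y} \<subseteq> Q" "Q \<inter> I = {}"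
    using prime_filter_theorem[OF principal_filter[OF k] ideal_below_sup_outside[OF pP pA]]
    unfolding I_def by blast
  have "Q \<subseteq> P"
    using Q(3) prime_filter_subset[OF Q(1)] sup_upper1 pA unfolding I_def by blast
  moreover have "Q \<in> phi k"
    using Q k refl_le unfolding phi_def prime_filters_def by blast
  ultimately have "Q = P"
    using Pmin by blast
  moreover have "p \<in> I"
    unfolding I_def using pA bot_closed prime_filter_bot[OF pP] sup_upper2[OF bot_closed pA] by blast
  ultimately show False
    using Q(3) p by blast
qed

lemma minimal_prime_filter_completely_prime:
  assumes k: "k \<in> compact_elems A le" and P: "P \<in> minimals (\<subseteq>) (phi k)"
    and S: "S \<subseteq> A" and JS: "join S \<in> P"
  shows "\<exists>s\<in>S. s \<in> P"
proof -
  have kA: "k \<in> A" and wb: "way_below A le k k"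
    using k unfolding compact_elems_def by auto
  have kP: "k \<in> P" and pP: "prime_filter P"
    using P prime_filtersD unfolding minimals_def phi_def by auto
  obtain c where c: "c \<in> A" "c \<notin> P" "k \<sqsubseteq> fsup c (join S)"
    using minimal_prime_filter_cover[OF kA P JS] by blast
  have cS: "insert c S \<subseteq> A"
    using c(1) S by blast
  have "k \<sqsubseteq> join (insert c S)"
    using join_insert[OF c(1) S] c(3) by simp
  then obtain T where T: "T \<subseteq> insert c S" "finite T" "k \<sqsubseteq> join T"
    using way_belowD[OF wb cS] by blast
  have TA: "T \<subseteq> A"
    using T(1) cS by blast
  have "join T \<in> P"
    using prime_filter_upward[OF pP kP join_closed[OF TA] T(3)] .
  then obtain t where "t \<in> T" "t \<in> P"
    using prime_filter_join_finite[OF pP T(2) TA] by blast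
  then show ?thesis
    using T(1) c(2) by blast
qed

lemma downclosure_completely_prime_clopen:
  assumes P: "P \<in> prime_filters" and cp: "\<And>S. S \<subseteq> A \<Longrightarrow> join S \<in> P \<Longrightarrow> \<exists>s\<in>S. s \<in> P"
  shows "clopenin dual_space (downclosure dual_space (\<subseteq>) {P})"
proof -
  define b where "b = join (A - P)"
  have bA: "b \<in> A"
    unfolding b_def by (rule join_closed) blast
  have "b \<notin> P"
    using cp[of "A - P"] unfolding b_def by blast
  moreover have "Q \<subseteq> P" if Q: "Q \<in> prime_filters" "b \<notin> Q" for Q
    using Q join_upper[of "A - P"] prime_filter_upward[OF _ _ bA] prime_filter_subset prime_filtersD
    unfolding b_def by blast
  ultimately have "downclosure dual_space (\<subseteq>) {P} = prime_filters - phi b"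
    using P unfolding downclosure_def topspace_dual_space phi_def by blast
  moreover have "closedin dual_space (prime_filters - phi b)"
    using phi_open[OF bA] phi_subset unfolding closedin_def topspace_dual_space
    by (simp add: Diff_Diff_Int inf.absorb2)
  ultimately show ?thesis
    unfolding clopenin_def using phi_compl_open[OF bA] by simp
qed

lemma phi_compact_ClopSUp:
  assumes k: "k \<in> compact_elems A le"
  shows "phi k \<in> ClopSUp dual_space (\<subseteq>)"
proof -
  have kA: "k \<in> A"
    using k unfolding compact_elems_def by blast
  have "P \<in> spatial_part dual_space (\<subseteq>)" if P: "P \<in> minimals (\<subseteq>) (phi k)" for P
  proof -
    have "P \<in> prime_filters"
      using P unfolding minimals_def phi_def by blast
    then show ?thesis
      using downclosure_completely_prime_clopen minimal_prime_filter_completely_prime[OF k P]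
      unfolding spatial_part_def topspace_dual_space by blast
  qed
  then show ?thesis
    unfolding ClopSUp_def scott_upset_def
    using phi_clopen[OF kA] phi_closed[OF kA] upset_phi by blast
qed

end

section \<open>Algebraic frames as frames of clopen upsets\<close>

context frame_lattice
begin

lemma algebraic_L_space_dual_space:
  assumes algebraic: "\<forall>a\<in>A. a = join {b \<in> compact_elems A le. b \<sqsubseteq> a}"
  shows "algebraic_L_space dual_space (\<subseteq>)"
  unfolding algebraic_L_space_def
proof (intro conjI ballI)
  show "L_space dual_space (\<subseteq>)"
    by (rule L_space_dual_space)
  fix U assume "U \<in> ClopUp dual_space (\<subseteq>)"
  then obtain a where a: "a \<in> A" "U = phi a"
    using ClopUp_dual_space by blast
  define K where "K = {b \<in> compact_elems A le. b \<sqsubseteq> a}"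
  have K: "K \<subseteq> A"
    unfolding K_def compact_elems_def by blast
  have "U = dual_space closure_of \<Union>(phi ` K)"
    using algebraic a closure_Union_phi[OF K] unfolding K_def by simp
  also have "\<dots> \<subseteq> dual_space closure_of (core dual_space (\<subseteq>) U)"
  proof (rule closure_of_mono)
    have "phi k \<in> ClopSUp dual_space (\<subseteq>)" "phi k \<subseteq> U" if "k \<in> K" for k
      using that phi_compact_ClopSUp phi_mono a unfolding K_def by blast+
    then show "\<Union>(phi ` K) \<subseteq> core dual_space (\<subseteq>) U"
      unfolding core_def by blast
  qed
  finally show "U \<subseteq> dual_space closure_of (core dual_space (\<subseteq>) U)" .
qed

lemma frame_hom_phi: "frame_hom A le (ClopUp dual_space (\<subseteq>)) (\<subseteq>) phi"
proof -
  interpret D: lspace dual_space "(\<subseteq>)"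
    by (rule lspace.intro[OF L_space_dual_space])
  have "phi (ftop A le) = ftop (ClopUp dual_space (\<subseteq>)) (\<subseteq>)"
    using phi_top D.ftop_ClopUp topspace_dual_space by simp
  moreover have "phi (meet a b) = fmeet (ClopUp dual_space (\<subseteq>)) (\<subseteq>) (phi a) (phi b)" if "a \<in> A" "b \<in> A" for a b
    using D.fmeet_ClopUp ClopUp_dual_space phi_meet that by simp
  moreover have "phi (join S) = fjoin (ClopUp dual_space (\<subseteq>)) (\<subseteq>) (phi ` S)" if S: "S \<subseteq> A" for S
  proof -
    have "phi ` S \<subseteq> ClopUp dual_space (\<subseteq>)"
      using S ClopUp_dual_space by blast
    then show ?thesis
      using D.fjoin_ClopUp closure_Union_phi[OF S] by simp
  qed
  ultimately show ?thesis
    unfolding frame_hom_def using ClopUp_dual_space by blast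
qed

lemma alg_frame_iso_dual_space: "alg_frame_iso A le (ClopUp dual_space (\<subseteq>)) (\<subseteq>)"
proof -
  interpret D: lspace dual_space "(\<subseteq>)"
    by (rule lspace.intro[OF L_space_dual_space])
  define g where "g = inv_into A phi"
  have gA: "\<And>U. U \<in> ClopUp dual_space (\<subseteq>) \<Longrightarrow> g U \<in> A"
    unfolding g_def ClopUp_dual_space by (rule inv_into_into)
  have gh: "\<And>a. a \<in> A \<Longrightarrow> g (phi a) = a"
    unfolding g_def using inv_into_f_f[OF inj_on_phi] by blast
  have hg: "\<And>U. U \<in> ClopUp dual_space (\<subseteq>) \<Longrightarrow> phi (g U) = U"
    unfolding g_def ClopUp_dual_space by (rule f_inv_into_f)
  have g: "frame_hom (ClopUp dual_space (\<subseteq>)) (\<subseteq>) A le g"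
    using frame_hom_inverse[OF frame frame_hom_phi gA gh hg] .
  have "coherent_frame_hom A le (ClopUp dual_space (\<subseteq>)) (\<subseteq>) phi"
    "coherent_frame_hom (ClopUp dual_space (\<subseteq>)) (\<subseteq>) A le g"
    unfolding coherent_frame_hom_def
    using frame_hom_phi g frame_iso_compact_elems[OF frame D.frame_ClopUp frame_hom_phi g gh hg]
      frame_iso_compact_elems[OF D.frame_ClopUp frame g frame_hom_phi hg gh] by blast+
  then show ?thesis
    unfolding alg_frame_iso_def using gh hg by blast
qed

end

theorem algebraic_frame_dual_space:
  fixes A :: "'a set"
  assumes "algebraic_frame A le"
  shows "\<exists>(T :: 'a set topology) leX. algebraic_L_space T leX \<and> alg_frame_iso A le (ClopUp T leX) (\<subseteq>)"
proof -
  interpret frame_lattice A le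
    using assms unfolding algebraic_frame_def by (simp add: frame_lattice.intro)
  have "algebraic_L_space dual_space (\<subseteq>)"
    using algebraic_L_space_dual_space assms unfolding algebraic_frame_def by blast
  then show ?thesis
    using alg_frame_iso_dual_space by blast
qed

theorem theorem4p9:
  shows
   \<comment> \<open>ClopUp is a contravariant functor AlgLPries -> AlgFrm: on objects\<close>
   "(\<forall>(T :: 'b topology) le. algebraic_L_space T le \<longrightarrow> algebraic_frame (ClopUp T le) (\<subseteq>))
    \<comment> \<open>on morphisms (f maps to f^-1)\<close>
    \<and> (\<forall>(T1 :: 'b topology) le1 (T2 :: 'c topology) le2 f.
         algebraic_L_space T1 le1 \<and> algebraic_L_space T2 le2 \<and> coherent_L_morphism T1 le1 T2 le2 f
         \<longrightarrow> coherent_frame_hom (ClopUp T2 le2) (\<subseteq>) (ClopUp T1 le1) (\<subseteq>)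
                (\<lambda>U. {x \<in> topspace T1. f x \<in> U}))
    \<comment> \<open>faithful\<close>
    \<and> (\<forall>(T1 :: 'b topology) le1 (T2 :: 'c topology) le2 f g.
         algebraic_L_space T1 le1 \<and> algebraic_L_space T2 le2
         \<and> coherent_L_morphism T1 le1 T2 le2 f \<and> coherent_L_morphism T1 le1 T2 le2 g
         \<and> (\<forall>U \<in> ClopUp T2 le2. {x \<in> topspace T1. f x \<in> U} = {x \<in> topspace T1. g x \<in> U})
         \<longrightarrow> (\<forall>x \<in> topspace T1. f x = g x))
    \<comment> \<open>full\<close>
    \<and> (\<forall>(T1 :: 'b topology) le1 (T2 :: 'c topology) le2 h.
         algebraic_L_space T1 le1 \<and> algebraic_L_space T2 le2
         \<and> coherent_frame_hom (ClopUp T2 le2) (\<subseteq>) (ClopUp T1 le1) (\<subseteq>) h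
         \<longrightarrow> (\<exists>f. coherent_L_morphism T1 le1 T2 le2 f
                 \<and> (\<forall>U \<in> ClopUp T2 le2. h U = {x \<in> topspace T1. f x \<in> U})))
    \<comment> \<open>essentially surjective\<close>
    \<and> (\<forall>(A :: 'a set) le. algebraic_frame A le \<longrightarrow>
         (\<exists>(T :: 'a set topology) leX. algebraic_L_space T leX
              \<and> alg_frame_iso A le (ClopUp T leX) (\<subseteq>)))"
proof (intro conjI allI impI ballI)
  show "algebraic_frame (ClopUp T le) (\<subseteq>)" if "algebraic_L_space T le" for T :: "'b topology" and le
    using that by (rule algebraic_frame_ClopUp)
  show "coherent_frame_hom (ClopUp T2 le2) (\<subseteq>) (ClopUp T1 le1) (\<subseteq>) (\<lambda>U. {x \<in> topspace T1. f x \<in> U})"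
    if "algebraic_L_space T1 le1 \<and> algebraic_L_space T2 le2 \<and> coherent_L_morphism T1 le1 T2 le2 f"
    for T1 :: "'b topology" and le1 and T2 :: "'c topology" and le2 f
    by (rule coherent_frame_hom_preimage_ClopUp) (use that in auto)
  show "f x = g x"
    if "algebraic_L_space T1 le1 \<and> algebraic_L_space T2 le2
         \<and> coherent_L_morphism T1 le1 T2 le2 f \<and> coherent_L_morphism T1 le1 T2 le2 g
         \<and> (\<forall>U \<in> ClopUp T2 le2. {x \<in> topspace T1. f x \<in> U} = {x \<in> topspace T1. g x \<in> U})"
      and "x \<in> topspace T1"
    for T1 :: "'b topology" and le1 and T2 :: "'c topology" and le2 f g x
    by (rule coherent_L_morphism_eqI) (use that in auto)
  show "\<exists>f. coherent_L_morphism T1 le1 T2 le2 f \<and> (\<forall>U \<in> ClopUp T2 le2. h U = {x \<in> topspace T1. f x \<in> U})"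
    if "algebraic_L_space T1 le1 \<and> algebraic_L_space T2 le2
         \<and> coherent_frame_hom (ClopUp T2 le2) (\<subseteq>) (ClopUp T1 le1) (\<subseteq>) h"
    for T1 :: "'b topology" and le1 and T2 :: "'c topology" and le2 h
    by (rule coherent_frame_hom_eq_preimage) (use that in auto)
  show "\<exists>(T :: 'a set topology) leX. algebraic_L_space T leX \<and> alg_frame_iso A le (ClopUp T leX) (\<subseteq>)"
    if "algebraic_frame A le" for A :: "'a set" and le
    using that by (rule algebraic_frame_dual_space)
qed

end
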